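(* Let $\mathcal{F}$ be a projective Fraïssé family of finite trees whose distinguished epimorphisms are monotone and weakly coherent, and which allows splitting edges. Let $\mathbb{F}$ be its projective Fraïssé limit. If $e$ is an endpoint of $\mathbb{F}$, then there is no $f\in\mathbb{F}\setminus\{e\}$ with $\langle e,f\rangle\in E(\mathbb{F})$.
   Context: Graphs have reflexive symmetric edge relations; topological graphs carry a compact, Hausdorff, zero-dimensional, second countable topology with closed edge set; finite graphs are discrete. An epimorphism $g\colon B\to A$ is a continuous surjection with $\langle a_1,a_2\rangle\in E(A)$ iff some $b_i\in g^{-1}(a_i)$ satisfy $\langle b_1,b_2\rangle\in E(B)$. A topological graph is disconnected if its vertex set splits into two nonempty disjoint closed sets with no edges between them, connected otherwise (subsets carry induced edges and subspace topology). Monotone: every fibre is connected. A topological graph is an arc if it is connected and removing any vertex, except at most two vertices (the endpoints of the arc), disconnects it. An embedding of topological graphs is an injective continuous map that is a homeomorphism onto its image and preserves and reflects edges. A vertex $x$ of a topological graph $G$ is an endpoint of $G$ if whenever $H$ is an arc and $f\colon H\to G$ an embedding with $x$ in its image, $x$ is the image of an endpoint of $H$. In a finite tree, $\mathrm{ord}(a)$ is the number of neighbours other than $a$. For monotone $f\colon B\to A$ of finite trees, $a\in A$ with $\mathrm{ord}(a)=n\ge3$ is a point of weak coherence (witnessed by $b$) if $b\in f^{-1}(a)$, $\mathrm{ord}(b)=m\ge n$ and an injection $p\colon n\to m$ satisfies $f^{-1}(A_i)\subseteq B_{p(i)}$ ($A_i$, $B_j$ the components of $A\setminus\{a\}$,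 $B\setminus\{b\}$); $f$ is weakly coherent if this holds at every vertex of order $\ge3$. A projective Fraïssé family: class of finite graphs with distinguished epimorphisms, countably many up to isomorphism, containing identities, closed under composition, with joint projection and projective amalgamation. A Fraïssé sequence: compatible distinguished epimorphisms $f^m_n\colon F_m\to F_n$ such that each member is the image of some $F_n$, and every distinguished $f\colon A\to F_m$ satisfies $f\circ g=f^n_m$ for some $n\ge m$ and distinguished $g\colon F_n\to A$. The projective Fraïssé limit is $\varprojlim F_n\subseteq\prod F_n$ with coordinatewise edges. Allowing splitting edges: for each member $G$ and nontrivial edge $\{a,b\}$, replacing it by a path $a,\ast,b$ through a new vertex yields a member, and the two maps collapsing $\ast$ to $a$, resp. $b$ (identity elsewhere) are distinguished. *)

theory Defs
  imports "HOL-Analysis.Analysis"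
begin

type_synonym fgraph = "nat set \<times> (nat \<times> nat) set"

definition gV :: "fgraph \<Rightarrow> nat set" where "gV G = fst G"
definition gE :: "fgraph \<Rightarrow> (nat \<times> nat) set" where "gE G = snd G"

definition is_fgraph :: "fgraph \<Rightarrow> bool" where
  "is_fgraph G \<longleftrightarrow> finite (gV G) \<and> gE G \<subseteq> gV G \<times> gV G
     \<and> (\<forall>v\<in>gV G. (v,v) \<in> gE G) \<and> (\<forall>a b. (a,b) \<in> gE G \<longrightarrow> (b,a) \<in> gE G)"

text \<open>connectedness of a vertex subset S (induced edges; finite graphs are discrete,
  so every subset is closed)\<close>
definition set_connected :: "('a \<times> 'a) set \<Rightarrow> 'a set \<Rightarrow> bool" where
  "set_connected E S \<longleftrightarrow> \<not> (\<exists>A B. A \<noteq> {} \<and> B \<noteq> {} \<and> A \<inter> B = {} \<and> A \<union> B = S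
       \<and> (\<forall>a\<in>A. \<forall>b\<in>B. (a,b) \<notin> E))"

definition components_of :: "('a \<times> 'a) set \<Rightarrow> 'a set \<Rightarrow> 'a set set" where
  "components_of E S = {C. C \<subseteq> S \<and> C \<noteq> {} \<and> set_connected E C
       \<and> (\<forall>D. C \<subseteq> D \<and> D \<subseteq> S \<and> set_connected E D \<longrightarrow> D = C)}"

definition has_cycle :: "fgraph \<Rightarrow> bool" where
  "has_cycle G \<longleftrightarrow> (\<exists>xs. length xs \<ge> 3 \<and> distinct xs \<and> set xs \<subseteq> gV G
       \<and> (\<forall>i. Suc i < length xs \<longrightarrow> (xs ! i, xs ! Suc i) \<in> gE G)
       \<and> (last xs, hd xs) \<in> gE G)"

definition is_ftree :: "fgraph \<Rightarrow> bool" where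
  "is_ftree G \<longleftrightarrow> is_fgraph G \<and> set_connected (gE G) (gV G) \<and> \<not> has_cycle G"

text \<open>epimorphism f : B \<rightarrow> A (continuity is automatic for discrete graphs)\<close>
definition is_epi :: "(nat \<Rightarrow> nat) \<Rightarrow> fgraph \<Rightarrow> fgraph \<Rightarrow> bool" where
  "is_epi f B A \<longleftrightarrow> f ` gV B = gV A \<and>
     (\<forall>a1\<in>gV A. \<forall>a2\<in>gV A. (a1,a2) \<in> gE A \<longleftrightarrow>
        (\<exists>b1\<in>gV B. \<exists>b2\<in>gV B. f b1 = a1 \<and> f b2 = a2 \<and> (b1,b2) \<in> gE B))"

definition fibre :: "(nat \<Rightarrow> nat) \<Rightarrow> fgraph \<Rightarrow> nat \<Rightarrow> nat set" where
  "fibre f B a = {b \<in> gV B. f b = a}"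

definition monotone_epi :: "(nat \<Rightarrow> nat) \<Rightarrow> fgraph \<Rightarrow> fgraph \<Rightarrow> bool" where
  "monotone_epi f B A \<longleftrightarrow> (\<forall>a\<in>gV A. set_connected (gE B) (fibre f B a))"

definition ord :: "fgraph \<Rightarrow> nat \<Rightarrow> nat" where
  "ord G a = card {x \<in> gV G. x \<noteq> a \<and> (a,x) \<in> gE G}"

text \<open>point of weak coherence, witnessed by b; the injection p : n \<rightarrow> m between the
  enumerated components is expressed as an injection between the sets of components\<close>
definition weak_coherence_witness :: "(nat \<Rightarrow> nat) \<Rightarrow> fgraph \<Rightarrow> fgraph \<Rightarrow> nat \<Rightarrow> nat \<Rightarrow> bool" where
  "weak_coherence_witness f B A a b \<longleftrightarrow> a \<in> gV A \<and> ord A a \<ge> 3 \<and> b \<in> fibre f B a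
     \<and> ord B b \<ge> ord A a
     \<and> (\<exists>p. inj_on p (components_of (gE A) (gV A - {a}))
          \<and> (\<forall>C\<in>components_of (gE A) (gV A - {a}).
                p C \<in> components_of (gE B) (gV B - {b})
              \<and> {x \<in> gV B. f x \<in> C} \<subseteq> p C))"

definition weakly_coherent :: "(nat \<Rightarrow> nat) \<Rightarrow> fgraph \<Rightarrow> fgraph \<Rightarrow> bool" where
  "weakly_coherent f B A \<longleftrightarrow>
     (\<forall>a\<in>gV A. ord A a \<ge> 3 \<longrightarrow> (\<exists>b. weak_coherence_witness f B A a b))"

text \<open>A family: a class K of finite graphs and a set D of distinguished epimorphisms,
  (f, B, A) \<in> D meaning f : B \<rightarrow> A. Countably many up to isomorphism is automatic
  since vertices are natural numbers.\<close>
definition proj_fraisse_family :: "fgraph set \<Rightarrow> ((nat \<Rightarrow> nat) \<times> fgraph \<times> fgraph) set \<Rightarrow> bool" where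
  "proj_fraisse_family K D \<longleftrightarrow>
     (\<forall>A\<in>K. is_fgraph A)
   \<and> (\<forall>(f,B,A)\<in>D. B \<in> K \<and> A \<in> K \<and> is_epi f B A)
   \<and> (\<forall>A\<in>K. (id, A, A) \<in> D)
   \<and> (\<forall>f g A B C. (g, C, B) \<in> D \<and> (f, B, A) \<in> D \<longrightarrow> (f \<circ> g, C, A) \<in> D)
   \<and> (\<forall>A\<in>K. \<forall>B\<in>K. \<exists>C\<in>K. \<exists>f g. (f, C, A) \<in> D \<and> (g, C, B) \<in> D)
   \<and> (\<forall>f g A B C. (f, B, A) \<in> D \<and> (g, C, A) \<in> D \<longrightarrow>
        (\<exists>E' f' g'. (f', E', B) \<in> D \<and> (g', E', C) \<in> D \<and>
            (\<forall>x\<in>gV E'. f (f' x) = g (g' x))))"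

definition split_edge :: "fgraph \<Rightarrow> nat \<Rightarrow> nat \<Rightarrow> nat \<Rightarrow> fgraph" where
  "split_edge G a b c = (gV G \<union> {c},
      (gE G - {(a,b),(b,a)}) \<union> {(a,c),(c,a),(c,b),(b,c),(c,c)})"

definition collapse :: "nat \<Rightarrow> nat \<Rightarrow> nat \<Rightarrow> nat" where
  "collapse c a = (\<lambda>x. if x = c then a else x)"

definition allows_splitting_edges :: "fgraph set \<Rightarrow> ((nat \<Rightarrow> nat) \<times> fgraph \<times> fgraph) set \<Rightarrow> bool" where
  "allows_splitting_edges K D \<longleftrightarrow>
     (\<forall>G\<in>K. \<forall>a b. (a,b) \<in> gE G \<and> a \<noteq> b \<longrightarrow>
        (\<exists>c. c \<notin> gV G \<and> split_edge G a b c \<in> K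
             \<and> (collapse c a, split_edge G a b c, G) \<in> D
             \<and> (collapse c b, split_edge G a b c, G) \<in> D))"

text \<open>bonding maps: step n : F (n+1) \<rightarrow> F n; bond step m d = f^{m+d}_m\<close>
fun bond :: "(nat \<Rightarrow> nat \<Rightarrow> nat) \<Rightarrow> nat \<Rightarrow> nat \<Rightarrow> nat \<Rightarrow> nat" where
  "bond step m 0 = id"
| "bond step m (Suc d) = bond step m d \<circ> step (m + d)"

definition fraisse_sequence ::
  "fgraph set \<Rightarrow> ((nat \<Rightarrow> nat) \<times> fgraph \<times> fgraph) set \<Rightarrow> (nat \<Rightarrow> fgraph) \<Rightarrow> (nat \<Rightarrow> nat \<Rightarrow> nat) \<Rightarrow> bool" where
  "fraisse_sequence K D F step \<longleftrightarrow>
     (\<forall>n. F n \<in> K \<and> (step n, F (Suc n), F n) \<in> D)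
   \<and> (\<forall>A\<in>K. \<exists>n f. (f, F n, A) \<in> D)
   \<and> (\<forall>m f A. (f, A, F m) \<in> D \<longrightarrow>
        (\<exists>n\<ge>m. \<exists>g. (g, F n, A) \<in> D \<and> (\<forall>x\<in>gV (F n). f (g x) = bond step m (n - m) x)))"

definition limV :: "(nat \<Rightarrow> fgraph) \<Rightarrow> (nat \<Rightarrow> nat \<Rightarrow> nat) \<Rightarrow> (nat \<Rightarrow> nat) set" where
  "limV F step = {x. \<forall>n. x n \<in> gV (F n) \<and> step n (x (Suc n)) = x n}"

definition limE :: "(nat \<Rightarrow> fgraph) \<Rightarrow> (nat \<Rightarrow> nat \<Rightarrow> nat) \<Rightarrow> ((nat \<Rightarrow> nat) \<times> (nat \<Rightarrow> nat)) set" where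
  "limE F step = {(x,y). x \<in> limV F step \<and> y \<in> limV F step \<and> (\<forall>n. (x n, y n) \<in> gE (F n))}"

definition limT :: "(nat \<Rightarrow> fgraph) \<Rightarrow> (nat \<Rightarrow> nat \<Rightarrow> nat) \<Rightarrow> (nat \<Rightarrow> nat) topology" where
  "limT F step = subtopology (product_topology (\<lambda>n. discrete_topology (gV (F n))) UNIV) (limV F step)"

definition top_graph :: "'a topology \<Rightarrow> ('a \<times> 'a) set \<Rightarrow> bool" where
  "top_graph T E \<longleftrightarrow> compact_space T \<and> Hausdorff_space T \<and> T dim_le 0 \<and> second_countable T
     \<and> E \<subseteq> topspace T \<times> topspace T \<and> closedin (prod_topology T T) E
     \<and> (\<forall>v\<in>topspace T. (v,v) \<in> E) \<and> (\<forall>a b. (a,b) \<in> E \<longrightarrow> (b,a) \<in> E)"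

definition tg_connected :: "'a topology \<Rightarrow> ('a \<times> 'a) set \<Rightarrow> 'a set \<Rightarrow> bool" where
  "tg_connected T E S \<longleftrightarrow> \<not> (\<exists>A B. closedin (subtopology T S) A \<and> closedin (subtopology T S) B
      \<and> A \<noteq> {} \<and> B \<noteq> {} \<and> A \<inter> B = {} \<and> A \<union> B = S \<and> (\<forall>a\<in>A. \<forall>b\<in>B. (a,b) \<notin> E))"

definition arc_endpoints :: "'a topology \<Rightarrow> ('a \<times> 'a) set \<Rightarrow> 'a set" where
  "arc_endpoints T E = {v \<in> topspace T. tg_connected T E (topspace T - {v})}"

definition is_arc :: "'a topology \<Rightarrow> ('a \<times> 'a) set \<Rightarrow> bool" where
  "is_arc T E \<longleftrightarrow> top_graph T E \<and> tg_connected T E (topspace T)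
     \<and> finite (arc_endpoints T E) \<and> card (arc_endpoints T E) \<le> 2"

definition tg_embedding :: "'a topology \<Rightarrow> ('a \<times> 'a) set \<Rightarrow> 'b topology \<Rightarrow> ('b \<times> 'b) set \<Rightarrow> ('a \<Rightarrow> 'b) \<Rightarrow> bool" where
  "tg_embedding TH EH TG EG f \<longleftrightarrow> inj_on f (topspace TH) \<and> embedding_map TH TG f
     \<and> (\<forall>a\<in>topspace TH. \<forall>b\<in>topspace TH. (a,b) \<in> EH \<longleftrightarrow> (f a, f b) \<in> EG)"

text \<open>endpoint of G; arcs H are taken with vertex type equal to that of G (every
  arc embedded in G is isomorphic to its image, so this loses no generality)\<close>
definition is_endpoint :: "'a topology \<Rightarrow> ('a \<times> 'a) set \<Rightarrow> 'a \<Rightarrow> bool" where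
  "is_endpoint T E x \<longleftrightarrow> x \<in> topspace T \<and>
     (\<forall>(TH :: 'a topology) EH f. is_arc TH EH \<and> tg_embedding TH EH T E f \<and> x \<in> f ` topspace TH
        \<longrightarrow> (\<exists>h\<in>arc_endpoints TH EH. f h = x))"

end

theory Submission
  imports Defs
begin

(*
  Suppose f \<noteq> e is adjacent to e in the limit and e n \<noteq> f n. Splitting the edge {e n, f n}
  of F n by a new vertex c and applying the Fraisse property to the collapse of c onto e n, some
  bonding map factors through a monotone epimorphism g from a later level F m onto the split
  tree, with g (e m) = c and g (f m) = f n; let v be a thread with g (v m) = e n. At a level k, a
  connected set containing f k and v k is mapped onto a connected set containing f n and e n,
  hence c, and the fibre over c is connected, so e k lies on the tree path between f k and v k. The
  threads lying at every level between f and v form an arc of the limit: it is connected by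
  compactness, and every point other than f and v disconnects it, because it disconnects the
  finite paths from some level on. Thus e is an inner point of an arc, not an endpoint.
*)

section \<open>Connected vertex sets\<close>

lemma set_connectedI:
  assumes "sym E"
    and "\<And>A B. A \<noteq> {} \<Longrightarrow> B \<noteq> {} \<Longrightarrow> A \<inter> B = {} \<Longrightarrow> A \<union> B = S \<Longrightarrow>
           \<forall>a\<in>A. \<forall>b\<in>B. (a, b) \<notin> E \<and> (b, a) \<notin> E \<Longrightarrow> False"
  shows "set_connected E S"
  unfolding set_connected_def
proof (intro notI, elim exE conjE)
  fix A B
  assume AB: "A \<noteq> {}" "B \<noteq> {}" "A \<inter> B = {}" "A \<union> B = S"
    and "\<forall>a\<in>A. \<forall>b\<in>B. (a, b) \<notin> E"
  with \<open>sym E\<close> have "\<forall>a\<in>A. \<forall>b\<in>B. (a, b) \<notin> E \<and> (b, a) \<notin> E"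
    by (meson symD)
  with assms(2)[OF AB] show False .
qed

lemma set_connected_subset_cases:
  assumes "set_connected E C" "C \<subseteq> A \<union> B" "A \<inter> B = {}" "\<forall>a\<in>A. \<forall>b\<in>B. (a, b) \<notin> E"
  shows "C \<subseteq> A \<or> C \<subseteq> B"
proof (rule ccontr)
  assume "\<not> ?thesis"
  then have parts: "C \<inter> A \<noteq> {}" "C \<inter> B \<noteq> {}"
    using assms(2) by blast+
  have "\<not> set_connected E C"
    unfolding set_connected_def not_not
    by (rule exI[of _ "C \<inter> A"], rule exI[of _ "C \<inter> B"]) (use parts assms(2-4) in blast)
  then show False
    using assms(1) by contradiction
qed

lemma set_connected_singleton [simp]: "set_connected E {x}"
  unfolding set_connected_def by (auto simp: Un_singleton_iff)

lemma set_connected_image: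
  assumes "set_connected E C" and "\<forall>x\<in>C. \<forall>y\<in>C. (x, y) \<in> E \<longrightarrow> (f x, f y) \<in> E'"
  shows "set_connected E' (f ` C)"
  unfolding set_connected_def
proof (intro notI, elim exE conjE)
  fix X Y
  assume XY: "X \<noteq> {}" "Y \<noteq> {}" "X \<inter> Y = {}" "X \<union> Y = f ` C"
    and no_edge: "\<forall>a\<in>X. \<forall>b\<in>Y. (a, b) \<notin> E'"
  have "C \<subseteq> {x \<in> C. f x \<in> X} \<or> C \<subseteq> {x \<in> C. f x \<in> Y}"
  proof (rule set_connected_subset_cases[OF assms(1)])
    show "C \<subseteq> {x \<in> C. f x \<in> X} \<union> {x \<in> C. f x \<in> Y}"
      using XY(4) by auto
    show "\<forall>a\<in>{x \<in> C. f x \<in> X}. \<forall>b\<in>{x \<in> C. f x \<in> Y}. (a, b) \<notin> E"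
      using no_edge assms(2) by auto
  qed (use XY(3) in auto)
  then have "f ` C \<subseteq> X \<or> f ` C \<subseteq> Y"
    by auto
  then show False
    using XY(1-4) by auto
qed

lemma set_connected_Un_adjacent:
  assumes "sym E" "set_connected E C1" "set_connected E C2" "x \<in> C1" "z \<in> C2"
    and "x = z \<or> (x, z) \<in> E"
  shows "set_connected E (C1 \<union> C2)"
proof (rule set_connectedI[OF \<open>sym E\<close>])
  fix A B
  assume AB: "A \<noteq> {}" "B \<noteq> {}" "A \<inter> B = {}" "A \<union> B = C1 \<union> C2"
    and no_edge: "\<forall>a\<in>A. \<forall>b\<in>B. (a, b) \<notin> E \<and> (b, a) \<notin> E"
  have "C1 \<subseteq> A \<or> C1 \<subseteq> B"
    by (rule set_connected_subset_cases[OF assms(2)]) (use AB no_edge in auto)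
  moreover have "C2 \<subseteq> A \<or> C2 \<subseteq> B"
    by (rule set_connected_subset_cases[OF assms(3)]) (use AB no_edge in auto)
  ultimately show False
    using AB(1-4) no_edge assms(4-6) by blast
qed

lemma set_connected_Un:
  "sym E \<Longrightarrow> set_connected E C1 \<Longrightarrow> set_connected E C2 \<Longrightarrow> x \<in> C1 \<Longrightarrow> x \<in> C2 \<Longrightarrow>
    set_connected E (C1 \<union> C2)"
  by (rule set_connected_Un_adjacent[where x = x and z = x]) simp_all

lemma set_connected_insert:
  "sym E \<Longrightarrow> set_connected E C \<Longrightarrow> c \<in> C \<Longrightarrow> (x, c) \<in> E \<Longrightarrow> set_connected E (insert x C)"
  using set_connected_Un_adjacent[of E "{x}" C x c] by simp

lemma set_connected_if_joined:
  assumes "sym E" "y \<in> W"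
    and joined: "\<And>u. u \<in> W \<Longrightarrow> \<exists>C\<subseteq>W. set_connected E C \<and> y \<in> C \<and> u \<in> C"
  shows "set_connected E W"
proof (rule set_connectedI[OF \<open>sym E\<close>])
  fix A B
  assume AB: "A \<noteq> {}" "B \<noteq> {}" "A \<inter> B = {}" "A \<union> B = W"
    and no_edge: "\<forall>a\<in>A. \<forall>b\<in>B. (a, b) \<notin> E \<and> (b, a) \<notin> E"
  have same_side: "u \<in> A \<longleftrightarrow> y \<in> A" if u: "u \<in> W" for u
  proof -
    obtain C where C: "C \<subseteq> W" "set_connected E C" "y \<in> C" "u \<in> C"
      using joined[OF u] by blast
    have "C \<subseteq> A \<or> C \<subseteq> B"
      by (rule set_connected_subset_cases[OF C(2)]) (use C(1) AB no_edge in auto)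
    then show ?thesis
      using C(3,4) AB(3) by blast
  qed
  obtain a b where "a \<in> A" "b \<in> B"
    using AB by blast
  then show False
    using same_side[of a] same_side[of b] AB by blast
qed

definition is_path :: "('a \<times> 'a) set \<Rightarrow> 'a list \<Rightarrow> bool" where
  "is_path E xs \<longleftrightarrow> xs \<noteq> [] \<and> successively (\<lambda>x y. (x, y) \<in> E) xs"

lemma set_connected_path:
  assumes "sym E" "is_path E xs"
  shows "set_connected E (set xs)"
  using assms(2)
proof (induction xs)
  case Nil
  then show ?case
    by (simp add: is_path_def)
next
  case (Cons x xs)
  show ?case
  proof (cases "xs = []")
    case False
    with Cons.prems have "is_path E xs" "(x, hd xs) \<in> E"
      by (auto simp: is_path_def successively_Cons)
    with Cons.IH False show ?thesis
      using set_connected_insert[OF \<open>sym E\<close>, of "set xs" "hd xs" x] by simp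
  qed simp
qed

lemma distinct_path_extend:
  assumes xs: "is_path E xs" "distinct xs" and "(last xs, s) \<in> E"
  obtains ys where "is_path E ys" "hd ys = hd xs" "last ys = s" "distinct ys"
    "set ys \<subseteq> insert s (set xs)"
proof (cases "s \<in> set xs")
  case True
  then obtain ys zs where split: "xs = (ys @ [s]) @ zs"
    by (metis append.assoc append_Cons append_Nil split_list)
  then have "is_path E (ys @ [s])" "hd (ys @ [s]) = hd xs"
    using xs(1) by (auto simp: is_path_def successively_append_iff hd_append)
  moreover have "distinct (ys @ [s])" "set (ys @ [s]) \<subseteq> insert s (set xs)"
    using xs(2) split by auto
  ultimately show ?thesis
    using that[of "ys @ [s]"] by simp
next
  case False
  have "is_path E (xs @ [s])"
    using xs(1) assms(3) by (auto simp: is_path_def successively_append_iff)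
  moreover have "hd (xs @ [s]) = hd xs" "distinct (xs @ [s])"
    using xs False by (auto simp: is_path_def)
  ultimately show ?thesis
    using that[of "xs @ [s]"] by simp
qed

lemma set_connected_imp_path:
  assumes "set_connected E K" "p \<in> K" "q \<in> K"
  shows "\<exists>xs. is_path E xs \<and> hd xs = p \<and> last xs = q \<and> distinct xs \<and> set xs \<subseteq> K"
proof (rule ccontr)
  assume no_path: "\<not> ?thesis"
  define R where
    "R = {r \<in> K. \<exists>xs. is_path E xs \<and> hd xs = p \<and> last xs = r \<and> distinct xs \<and> set xs \<subseteq> K}"
  have p_R: "p \<in> R"
    unfolding R_def using assms(2) by (auto intro!: exI[of _ "[p]"] simp: is_path_def)
  have q_R: "q \<in> K - R"
    using no_path assms(3) unfolding R_def by blast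
  have no_edge: "(r, s) \<notin> E" if r: "r \<in> R" and s: "s \<in> K - R" for r s
  proof
    assume "(r, s) \<in> E"
    obtain xs where xs: "is_path E xs" "hd xs = p" "last xs = r" "distinct xs" "set xs \<subseteq> K"
      using r unfolding R_def by blast
    have "(last xs, s) \<in> E"
      using \<open>(r, s) \<in> E\<close> xs(3) by simp
    then obtain ys where ys: "is_path E ys" "hd ys = p" "last ys = s" "distinct ys"
      "set ys \<subseteq> insert s (set xs)"
      using distinct_path_extend[OF xs(1,4)] xs(2) by blast
    moreover have "insert s (set xs) \<subseteq> K"
      using s xs(5) by blast
    ultimately have "s \<in> R"
      using s unfolding R_def by blast
    with s show False
      by blast
  qed
  have "\<not> set_connected E K"
    unfolding set_connected_def not_not
    by (rule exI[of _ R], rule exI[of _ "K - R"]) (use p_R q_R no_edge in \<open>auto simp: R_def\<close>)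
  with assms(1) show False
    by contradiction
qed

section \<open>Trees and their intervals\<close>

lemma sym_gE: "is_fgraph G \<Longrightarrow> sym (gE G)"
  unfolding is_fgraph_def sym_def by blast

lemma set_connected_joins_neighbour:
  assumes "sym E" "set_connected E X" "y \<in> X" "z \<in> X" "z \<noteq> y"
  shows "\<exists>C\<subseteq>X - {y}. set_connected E C \<and> z \<in> C \<and> (\<exists>p\<in>C. (y, p) \<in> E)"
proof -
  obtain xs where xs: "is_path E xs" "hd xs = y" "last xs = z" "distinct xs" "set xs \<subseteq> X"
    using set_connected_imp_path[OF assms(2-4)] by blast
  define ys where "ys = tl xs"
  have ys: "xs = y # ys" "ys \<noteq> []"
    using xs(1-3) assms(5) unfolding ys_def by (cases xs; auto simp: is_path_def)+
  with xs(1) have "is_path E ys" "(y, hd ys) \<in> E"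
    by (auto simp: is_path_def successively_Cons)
  show ?thesis
  proof (rule exI[of _ "set ys"], intro conjI)
    show "set ys \<subseteq> X - {y}" "z \<in> set ys"
      using xs ys by auto
    show "set_connected E (set ys)"
      using set_connected_path[OF assms(1) \<open>is_path E ys\<close>] .
    show "\<exists>p\<in>set ys. (y, p) \<in> E"
      using \<open>(y, hd ys) \<in> E\<close> ys(2) by auto
  qed
qed

lemma has_cycleI:
  assumes "set_connected (gE G) K" "K \<subseteq> gV G" "y \<in> gV G - K" "p \<in> K" "q \<in> K" "p \<noteq> q"
    and "(y, p) \<in> gE G" "(q, y) \<in> gE G"
  shows "has_cycle G"
proof -
  obtain xs where xs: "is_path (gE G) xs" "hd xs = p" "last xs = q" "distinct xs" "set xs \<subseteq> K"
    using set_connected_imp_path[OF assms(1,4,5)] by blast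
  have "length xs \<ge> 2"
    using xs(1-3) \<open>p \<noteq> q\<close> by (cases xs rule: remdups_adj.cases) (auto simp: is_path_def)
  moreover have "successively (\<lambda>x y. (x, y) \<in> gE G) (y # xs)"
    using xs(1,2) \<open>(y, p) \<in> gE G\<close> by (auto simp: is_path_def successively_Cons)
  then have "\<forall>i. Suc i < length (y # xs) \<longrightarrow> ((y # xs) ! i, (y # xs) ! Suc i) \<in> gE G"
    using successively_nth by blast
  ultimately show ?thesis
    unfolding has_cycle_def using xs assms(2,3,8)
    by (intro exI[of _ "y # xs"]) (auto simp: is_path_def)
qed

lemma tree_unique_neighbour_in_connected:
  "is_ftree G \<Longrightarrow> set_connected (gE G) K \<Longrightarrow> K \<subseteq> gV G \<Longrightarrow> y \<in> gV G - K \<Longrightarrow> p \<in> K \<Longrightarrow>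
    q \<in> K \<Longrightarrow> (y, p) \<in> gE G \<Longrightarrow> (q, y) \<in> gE G \<Longrightarrow> p = q"
  using has_cycleI unfolding is_ftree_def by blast

lemma tree_connected_through_middle:
  assumes tree: "is_ftree G" and C: "set_connected (gE G) C" "C \<subseteq> gV G" "a \<in> C" "b \<in> C"
    and "a \<noteq> b" "(c, a) \<in> gE G" "(b, c) \<in> gE G"
  shows "c \<in> C"
proof (rule ccontr)
  assume "c \<notin> C"
  moreover have "c \<in> gV G"
    using tree \<open>(c, a) \<in> gE G\<close> unfolding is_ftree_def is_fgraph_def by blast
  ultimately have "a = b"
    using tree_unique_neighbour_in_connected[OF tree C(1,2)] C(3,4) assms(7,8) by blast
  with \<open>a \<noteq> b\<close> show False ..
qed

(* In a tree, the vertex set of the path from a to b. *)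
definition tree_interval :: "fgraph \<Rightarrow> nat \<Rightarrow> nat \<Rightarrow> nat set" where
  "tree_interval G a b =
     {z \<in> gV G. \<forall>C. C \<subseteq> gV G \<and> set_connected (gE G) C \<and> a \<in> C \<and> b \<in> C \<longrightarrow> z \<in> C}"

lemma tree_interval_subset: "tree_interval G a b \<subseteq> gV G"
  unfolding tree_interval_def by blast

lemma tree_interval_ends: "a \<in> gV G \<Longrightarrow> b \<in> gV G \<Longrightarrow> a \<in> tree_interval G a b \<and> b \<in> tree_interval G a b"
  unfolding tree_interval_def by blast

lemma tree_interval_least:
  "C \<subseteq> gV G \<Longrightarrow> set_connected (gE G) C \<Longrightarrow> a \<in> C \<Longrightarrow> b \<in> C \<Longrightarrow> tree_interval G a b \<subseteq> C"
  unfolding tree_interval_def by blast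

(* A point y of M outside C would split M - {y} into a part containing a and a part containing b,
   each adjacent to y; joining them through C avoids y, so acyclicity makes them touch y in the
   same vertex, and their union is a smaller connected set containing a and b. *)
lemma tree_minimal_connected_subset:
  assumes tree: "is_ftree G" and M: "M \<subseteq> gV G" "set_connected (gE G) M" "a \<in> M" "b \<in> M"
    and minimal: "\<And>M'. M' \<subset> M \<Longrightarrow> set_connected (gE G) M' \<Longrightarrow> a \<in> M' \<Longrightarrow> b \<in> M' \<Longrightarrow> False"
    and C: "C \<subseteq> gV G" "set_connected (gE G) C" "a \<in> C" "b \<in> C"
  shows "M \<subseteq> C"
proof
  fix y
  assume "y \<in> M"
  have sym: "sym (gE G)"
    using tree sym_gE unfolding is_ftree_def by blast
  show "y \<in> C"
  proof (rule ccontr)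
    assume "y \<notin> C"
    with C have "a \<noteq> y" "b \<noteq> y"
      by auto
    then obtain Ca pa Cb pb where
      Ca: "Ca \<subseteq> M - {y}" "set_connected (gE G) Ca" "a \<in> Ca" "pa \<in> Ca" "(y, pa) \<in> gE G" and
      Cb: "Cb \<subseteq> M - {y}" "set_connected (gE G) Cb" "b \<in> Cb" "pb \<in> Cb" "(y, pb) \<in> gE G"
      using set_connected_joins_neighbour[OF sym M(2) \<open>y \<in> M\<close>] M(3,4) by metis
    have conn: "set_connected (gE G) (Ca \<union> C \<union> Cb)"
      using set_connected_Un[OF sym set_connected_Un[OF sym Ca(2) C(2) Ca(3) C(3)] Cb(2)] C(4) Cb(3)
      by blast
    have outside: "Ca \<union> C \<union> Cb \<subseteq> gV G" "y \<in> gV G - (Ca \<union> C \<union> Cb)"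
      using Ca(1) Cb(1) C(1) M(1) \<open>y \<in> M\<close> \<open>y \<notin> C\<close> by auto
    have "pa \<in> Ca \<union> C \<union> Cb" "pb \<in> Ca \<union> C \<union> Cb" "(pb, y) \<in> gE G"
      using Ca(4) Cb(4) symD[OF sym Cb(5)] by auto
    then have "pa = pb"
      using tree_unique_neighbour_in_connected[OF tree conn outside] Ca(5) by blast
    then have "set_connected (gE G) (Ca \<union> Cb)"
      using set_connected_Un[OF sym Ca(2) Cb(2)] Ca(4) Cb(4) by blast
    moreover have "Ca \<union> Cb \<subset> M"
      using Ca(1) Cb(1) \<open>y \<in> M\<close> by blast
    ultimately show False
      using minimal Ca(3) Cb(3) by blast
  qed
qed

lemma set_connected_tree_interval:
  assumes tree: "is_ftree G" and "a \<in> gV G" "b \<in> gV G"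
  shows "set_connected (gE G) (tree_interval G a b)"
proof -
  define P where "P C \<longleftrightarrow> C \<subseteq> gV G \<and> set_connected (gE G) C \<and> a \<in> C \<and> b \<in> C" for C
  have "P (gV G)"
    using tree assms(2,3) unfolding P_def is_ftree_def by blast
  then obtain M where "P M" and least: "\<And>C. P C \<Longrightarrow> card M \<le> card C"
    using ex_has_least_nat[of P "gV G" card] by blast
  then have M: "M \<subseteq> gV G" "set_connected (gE G) M" "a \<in> M" "b \<in> M"
    unfolding P_def by auto
  have "finite M"
    using M(1) tree finite_subset unfolding is_ftree_def is_fgraph_def by blast
  have minimal: False if "M' \<subset> M" "set_connected (gE G) M'" "a \<in> M'" "b \<in> M'" for M'
  proof -
    have "card M \<le> card M'"
      using that M least unfolding P_def by blast
    with psubset_card_mono[OF \<open>finite M\<close> that(1)] show False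
      by simp
  qed
  have "M \<subseteq> C" if "C \<subseteq> gV G" "set_connected (gE G) C" "a \<in> C" "b \<in> C" for C
    by (rule tree_minimal_connected_subset[OF tree M minimal that])
  then have "M \<subseteq> tree_interval G a b"
    using M(1) unfolding tree_interval_def by blast
  moreover have "tree_interval G a b \<subseteq> M"
    using tree_interval_least[OF M] .
  ultimately show ?thesis
    using M(2) by (metis subset_antisym)
qed

definition joined_avoiding :: "fgraph \<Rightarrow> nat \<Rightarrow> nat \<Rightarrow> nat \<Rightarrow> bool" where
  "joined_avoiding G y a b \<longleftrightarrow> (\<exists>C\<subseteq>gV G - {y}. set_connected (gE G) C \<and> a \<in> C \<and> b \<in> C)"

lemma joined_avoiding_refl: "a \<in> gV G \<Longrightarrow> a \<noteq> y \<Longrightarrow> joined_avoiding G y a a"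
  unfolding joined_avoiding_def by (intro exI[of _ "{a}"]) auto

lemma joined_avoiding_trans:
  assumes "sym (gE G)" "joined_avoiding G y a b" "joined_avoiding G y b c"
  shows "joined_avoiding G y a c"
proof -
  obtain C1 C2 where C1: "C1 \<subseteq> gV G - {y}" "set_connected (gE G) C1" "a \<in> C1" "b \<in> C1"
    and C2: "C2 \<subseteq> gV G - {y}" "set_connected (gE G) C2" "b \<in> C2" "c \<in> C2"
    using assms(2,3) unfolding joined_avoiding_def by blast
  have "set_connected (gE G) (C1 \<union> C2)"
    using set_connected_Un[OF assms(1) C1(2) C2(2) C1(4) C2(3)] .
  then show ?thesis
    unfolding joined_avoiding_def using C1 C2 by (intro exI[of _ "C1 \<union> C2"]) auto
qed

lemma set_connected_minus_component:
  fixes z :: nat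
  assumes G: "is_fgraph G" "set_connected (gE G) (gV G)" and y: "y \<in> gV G"
  defines "Z \<equiv> {u \<in> gV G - {y}. joined_avoiding G y z u}"
  shows "set_connected (gE G) (gV G - Z)"
proof (rule set_connected_if_joined[OF sym_gE[OF G(1)]])
  show "y \<in> gV G - Z"
    using y unfolding Z_def by blast
  fix u
  assume u: "u \<in> gV G - Z"
  show "\<exists>C\<subseteq>gV G - Z. set_connected (gE G) C \<and> y \<in> C \<and> u \<in> C"
  proof (cases "u = y")
    case False
    then obtain C p where C: "C \<subseteq> gV G - {y}" "set_connected (gE G) C" "u \<in> C" "p \<in> C"
      "(y, p) \<in> gE G"
      using set_connected_joins_neighbour[OF sym_gE[OF G(1)] G(2) y] u by blast
    have "C \<inter> Z = {}"
    proof (rule ccontr)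
      assume "C \<inter> Z \<noteq> {}"
      then obtain w where w: "w \<in> C" "joined_avoiding G y z w"
        unfolding Z_def by blast
      moreover have "joined_avoiding G y w u"
        unfolding joined_avoiding_def using C(1-3) w(1) by blast
      ultimately have "joined_avoiding G y z u"
        using joined_avoiding_trans[OF sym_gE[OF G(1)]] by blast
      then show False
        using u False C(1,3) unfolding Z_def by blast
    qed
    then show ?thesis
      using set_connected_insert[OF sym_gE[OF G(1)] C(2,4,5)] C(1,3) y u
      by (intro exI[of _ "insert y C"]) (auto simp: Z_def)
  qed (use u in \<open>auto intro!: exI[of _ "{y}"]\<close>)
qed

lemma joined_avoiding_if_tree_interval:
  assumes G: "is_fgraph G" "set_connected (gE G) (gV G)" and y: "y \<in> gV G"
    and z: "z \<in> tree_interval G a b" "z \<noteq> y" and ab: "a \<in> gV G" "b \<in> gV G"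
  shows "joined_avoiding G y a z \<or> joined_avoiding G y b z"
proof (rule ccontr)
  assume neither: "\<not> ?thesis"
  define Z where "Z = {u \<in> gV G - {y}. joined_avoiding G y z u}"
  have "z \<in> Z"
    using z tree_interval_subset joined_avoiding_refl unfolding Z_def by blast
  moreover have "a \<notin> Z" "b \<notin> Z"
    using neither unfolding Z_def joined_avoiding_def by blast+
  then have "tree_interval G a b \<subseteq> gV G - Z"
    using set_connected_minus_component[OF G y] ab unfolding Z_def by (intro tree_interval_least) auto
  ultimately show False
    using z(1) by blast
qed

lemma joined_avoiding_separates:
  assumes "sym (gE G)" "y \<in> tree_interval G u v"
    and "joined_avoiding G y u t1" "joined_avoiding G y v t2" "t1 = t2 \<or> (t1, t2) \<in> gE G"
  shows False
proof -
  obtain C1 C2 where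
    C1: "C1 \<subseteq> gV G - {y}" "set_connected (gE G) C1" "u \<in> C1" "t1 \<in> C1" and
    C2: "C2 \<subseteq> gV G - {y}" "set_connected (gE G) C2" "v \<in> C2" "t2 \<in> C2"
    using assms(3,4) unfolding joined_avoiding_def by blast
  have "set_connected (gE G) (C1 \<union> C2)"
    using set_connected_Un_adjacent[OF assms(1) C1(2) C2(2) C1(4) C2(4) assms(5)] .
  then have "tree_interval G u v \<subseteq> C1 \<union> C2"
    using C1 C2 by (intro tree_interval_least) auto
  with assms(2) C1(1) C2(1) show False
    by blast
qed

section \<open>Monotone epimorphisms\<close>

lemma is_epi_mem: "is_epi f B A \<Longrightarrow> x \<in> gV B \<Longrightarrow> f x \<in> gV A"
  unfolding is_epi_def by blast

lemma is_epi_surj: "is_epi f B A \<Longrightarrow> a \<in> gV A \<Longrightarrow> \<exists>b\<in>gV B. f b = a"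
  unfolding is_epi_def by (metis imageE)

lemma is_epi_edge:
  assumes "is_epi f B A" "x \<in> gV B" "y \<in> gV B" "(x, y) \<in> gE B"
  shows "(f x, f y) \<in> gE A"
  using assms is_epi_mem[OF assms(1)] unfolding is_epi_def by blast

lemma is_epi_edge_lift:
  assumes "is_epi f B A" "a1 \<in> gV A" "a2 \<in> gV A" "(a1, a2) \<in> gE A"
  shows "\<exists>b1\<in>gV B. \<exists>b2\<in>gV B. f b1 = a1 \<and> f b2 = a2 \<and> (b1, b2) \<in> gE B"
  using assms unfolding is_epi_def by blast

lemma is_epi_comp:
  assumes g: "is_epi g C B" and f: "is_epi f B A"
  shows "is_epi (f \<circ> g) C A"
  unfolding is_epi_def
proof (intro conjI ballI)
  show "(f \<circ> g) ` gV C = gV A"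
    using f g unfolding is_epi_def by (metis image_comp)
  fix a1 a2
  assume a: "a1 \<in> gV A" "a2 \<in> gV A"
  show "(a1, a2) \<in> gE A \<longleftrightarrow>
      (\<exists>c1\<in>gV C. \<exists>c2\<in>gV C. (f \<circ> g) c1 = a1 \<and> (f \<circ> g) c2 = a2 \<and> (c1, c2) \<in> gE C)"
  proof
    assume "(a1, a2) \<in> gE A"
    then obtain b1 b2 where b: "b1 \<in> gV B" "b2 \<in> gV B" "f b1 = a1" "f b2 = a2" "(b1, b2) \<in> gE B"
      using is_epi_edge_lift[OF f a] by blast
    then show "\<exists>c1\<in>gV C. \<exists>c2\<in>gV C. (f \<circ> g) c1 = a1 \<and> (f \<circ> g) c2 = a2 \<and> (c1, c2) \<in> gE C"
      using is_epi_edge_lift[OF g b(1,2,5)] by auto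
  next
    assume "\<exists>c1\<in>gV C. \<exists>c2\<in>gV C. (f \<circ> g) c1 = a1 \<and> (f \<circ> g) c2 = a2 \<and> (c1, c2) \<in> gE C"
    then show "(a1, a2) \<in> gE A"
      using is_epi_edge[OF f] is_epi_edge[OF g] is_epi_mem[OF g] by auto
  qed
qed

lemma is_epi_id: "is_fgraph A \<Longrightarrow> is_epi id A A"
  unfolding is_epi_def is_fgraph_def by auto

lemma monotone_epi_id: "monotone_epi id A A"
proof -
  have "fibre id A a = {a}" if "a \<in> gV A" for a
    using that unfolding fibre_def by auto
  then show ?thesis
    unfolding monotone_epi_def by simp
qed

lemma monotone_epi_separated_parts:
  assumes mono: "monotone_epi f B A" and "C \<subseteq> gV A"
    and XY: "X \<inter> Y = {}" "X \<union> Y = {x \<in> gV B. f x \<in> C}" "\<forall>a\<in>X. \<forall>b\<in>Y. (a, b) \<notin> gE B"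
    and "x \<in> X" "y \<in> Y"
  shows "f x \<noteq> f y"
proof
  assume "f x = f y"
  have "f x \<in> C" "x \<in> gV B" "y \<in> gV B"
    using \<open>x \<in> X\<close> \<open>y \<in> Y\<close> XY(2) by blast+
  have "fibre f B (f x) \<subseteq> X \<or> fibre f B (f x) \<subseteq> Y"
  proof (rule set_connected_subset_cases[of "gE B"])
    show "set_connected (gE B) (fibre f B (f x))"
      using mono \<open>f x \<in> C\<close> \<open>C \<subseteq> gV A\<close> unfolding monotone_epi_def by blast
    show "fibre f B (f x) \<subseteq> X \<union> Y"
      using \<open>f x \<in> C\<close> unfolding fibre_def XY(2) by auto
  qed (use XY(1,3) in auto)
  moreover have "x \<in> fibre f B (f x)" "y \<in> fibre f B (f x)"
    using \<open>x \<in> gV B\<close> \<open>y \<in> gV B\<close> \<open>f x = f y\<close> unfolding fibre_def by simp_all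
  ultimately show False
    using \<open>x \<in> X\<close> \<open>y \<in> Y\<close> XY(1) by blast
qed

lemma monotone_epi_parts_nonadjacent:
  assumes epi: "is_epi f B A" and mono: "monotone_epi f B A" and "C \<subseteq> gV A"
    and XY: "X \<inter> Y = {}" "X \<union> Y = {x \<in> gV B. f x \<in> C}" "\<forall>a\<in>X. \<forall>b\<in>Y. (a, b) \<notin> gE B"
    and "x \<in> X" "y \<in> Y"
  shows "(f x, f y) \<notin> gE A"
proof
  assume "(f x, f y) \<in> gE A"
  moreover have "f x \<in> C" "f y \<in> C"
    using \<open>x \<in> X\<close> \<open>y \<in> Y\<close> XY(2) by blast+
  ultimately obtain b1 b2 where
    b: "b1 \<in> gV B" "b2 \<in> gV B" "f b1 = f x" "f b2 = f y" "(b1, b2) \<in> gE B"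
    using is_epi_edge_lift[OF epi] \<open>C \<subseteq> gV A\<close> by blast
  with \<open>f x \<in> C\<close> \<open>f y \<in> C\<close> have "b1 \<in> X \<union> Y" "b2 \<in> X \<union> Y"
    unfolding XY(2) by auto
  moreover have "f x \<noteq> f b1" if "b1 \<in> Y"
    using monotone_epi_separated_parts[OF mono \<open>C \<subseteq> gV A\<close> XY \<open>x \<in> X\<close> that] .
  moreover have "f b2 \<noteq> f y" if "b2 \<in> X"
    using monotone_epi_separated_parts[OF mono \<open>C \<subseteq> gV A\<close> XY that \<open>y \<in> Y\<close>] .
  ultimately have "b1 \<in> X" "b2 \<in> Y"
    using b(3,4) by auto
  with b(5) XY(3) show False
    by blast
qed

lemma set_connected_vimage_monotone_epi:
  assumes epi: "is_epi f B A" and mono: "monotone_epi f B A" and sym: "sym (gE B)"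
    and C: "C \<subseteq> gV A" "set_connected (gE A) C"
  shows "set_connected (gE B) {x \<in> gV B. f x \<in> C}"
proof (rule set_connectedI[OF sym])
  fix X Y
  assume XY: "X \<noteq> {}" "Y \<noteq> {}" "X \<inter> Y = {}" "X \<union> Y = {x \<in> gV B. f x \<in> C}"
    and no_edge: "\<forall>a\<in>X. \<forall>b\<in>Y. (a, b) \<notin> gE B \<and> (b, a) \<notin> gE B"
  then have no_edge': "\<forall>a\<in>X. \<forall>b\<in>Y. (a, b) \<notin> gE B"
    by blast
  have images: "f ` X \<subseteq> C" "f ` Y \<subseteq> C"
    using XY(4) by blast+
  have "C \<subseteq> f ` X \<or> C \<subseteq> f ` Y"
  proof (rule set_connected_subset_cases[OF C(2)])
    show "C \<subseteq> f ` X \<union> f ` Y"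
    proof
      fix c
      assume "c \<in> C"
      then obtain x where "x \<in> gV B" "f x = c"
        using is_epi_surj[OF epi] C(1) by blast
      with \<open>c \<in> C\<close> XY(4) show "c \<in> f ` X \<union> f ` Y"
        by blast
    qed
    show "f ` X \<inter> f ` Y = {}"
      using monotone_epi_separated_parts[OF mono C(1) XY(3,4) no_edge'] by blast
    show "\<forall>a\<in>f ` X. \<forall>b\<in>f ` Y. (a, b) \<notin> gE A"
      using monotone_epi_parts_nonadjacent[OF epi mono C(1) XY(3,4) no_edge'] by blast
  qed
  moreover obtain x y where "x \<in> X" "y \<in> Y"
    using XY(1,2) by blast
  ultimately have "f y \<in> f ` X \<or> f x \<in> f ` Y"
    using images by blast
  then show False
    using monotone_epi_separated_parts[OF mono C(1) XY(3,4) no_edge'] \<open>x \<in> X\<close> \<open>y \<in> Y\<close>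
    by (metis imageE)
qed

lemma monotone_epi_comp:
  assumes "is_epi g C B" "monotone_epi g C B" "sym (gE C)" "is_epi f B A" "monotone_epi f B A"
  shows "monotone_epi (f \<circ> g) C A"
  unfolding monotone_epi_def
proof
  fix a
  assume "a \<in> gV A"
  then have "fibre f B a \<subseteq> gV B" "set_connected (gE B) (fibre f B a)"
    using assms(5) unfolding monotone_epi_def fibre_def by auto
  then have "set_connected (gE C) {x \<in> gV C. g x \<in> fibre f B a}"
    by (rule set_connected_vimage_monotone_epi[OF assms(1-3)])
  moreover have "{x \<in> gV C. g x \<in> fibre f B a} = fibre (f \<circ> g) C a"
    using is_epi_mem[OF assms(1)] unfolding fibre_def by auto
  ultimately show "set_connected (gE C) (fibre (f \<circ> g) C a)"
    by simp
qed

lemma image_tree_interval: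
  assumes epi: "is_epi f B A" and mono: "monotone_epi f B A" and tree: "is_ftree B"
    and ab: "a \<in> gV B" "b \<in> gV B"
  shows "f ` tree_interval B a b = tree_interval A (f a) (f b)"
proof
  have sym: "sym (gE B)"
    using tree sym_gE unfolding is_ftree_def by blast
  show "f ` tree_interval B a b \<subseteq> tree_interval A (f a) (f b)"
  proof (clarsimp simp: tree_interval_def [of A], intro conjI allI impI)
    fix z
    assume z: "z \<in> tree_interval B a b"
    then show "f z \<in> gV A"
      using tree_interval_subset is_epi_mem[OF epi] by blast
    fix C
    assume C: "C \<subseteq> gV A \<and> set_connected (gE A) C \<and> f a \<in> C \<and> f b \<in> C"
    then have "tree_interval B a b \<subseteq> {x \<in> gV B. f x \<in> C}"
      using ab set_connected_vimage_monotone_epi[OF epi mono sym]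
      by (intro tree_interval_least[of _ B]) auto
    with z show "f z \<in> C"
      by blast
  qed
  show "tree_interval A (f a) (f b) \<subseteq> f ` tree_interval B a b"
  proof (rule tree_interval_least)
    show "f ` tree_interval B a b \<subseteq> gV A"
      using tree_interval_subset is_epi_mem[OF epi] by blast
    show "set_connected (gE A) (f ` tree_interval B a b)"
      using set_connected_tree_interval[OF tree ab] tree_interval_subset is_epi_edge[OF epi]
      by (intro set_connected_image[of "gE B"]) blast+
    show "f a \<in> f ` tree_interval B a b" "f b \<in> f ` tree_interval B a b"
      using tree_interval_ends[OF ab] by auto
  qed
qed

lemma joined_avoiding_vimage:
  assumes "is_epi f B A" "monotone_epi f B A" "sym (gE B)" "y \<in> gV B" "w \<in> gV B" "z \<in> gV B"
    and "joined_avoiding A (f y) (f w) (f z)"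
  shows "joined_avoiding B y w z"
proof -
  obtain C where C: "C \<subseteq> gV A - {f y}" "set_connected (gE A) C" "f w \<in> C" "f z \<in> C"
    using assms(7) unfolding joined_avoiding_def by blast
  have "set_connected (gE B) {x \<in> gV B. f x \<in> C}"
    using C by (intro set_connected_vimage_monotone_epi[OF assms(1-3)]) auto
  then show ?thesis
    unfolding joined_avoiding_def using C assms(4-6)
    by (intro exI[of _ "{x \<in> gV B. f x \<in> C}"]) auto
qed

(* Otherwise the connected fibre over \<psi> x would join z to a neighbour p of x avoiding x, and
   together with C this would join y to p avoiding x: a cycle through x, unless p = y. *)
lemma tree_connected_reaches_fibre:
  assumes tree: "is_ftree B" and psi: "is_epi \<psi> B G" "monotone_epi \<psi> B G"
    and x: "x \<in> gV B" "(x, y) \<in> gE B" "\<psi> y \<noteq> \<psi> x"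
    and C: "C \<subseteq> gV B" "set_connected (gE B) C" "y \<in> C" "z \<in> C" "\<psi> z = \<psi> x"
  shows "x \<in> C"
proof (rule ccontr)
  assume "x \<notin> C"
  have sym: "sym (gE B)"
    using tree sym_gE unfolding is_ftree_def by blast
  have "set_connected (gE B) (fibre \<psi> B (\<psi> x))"
    using psi(2) is_epi_mem[OF psi(1) x(1)] unfolding monotone_epi_def by blast
  moreover have "x \<in> fibre \<psi> B (\<psi> x)" "z \<in> fibre \<psi> B (\<psi> x)" "z \<noteq> x"
    using x(1) C(1,4,5) \<open>x \<notin> C\<close> unfolding fibre_def by auto
  ultimately obtain D p where D: "D \<subseteq> fibre \<psi> B (\<psi> x) - {x}" "set_connected (gE B) D" "z \<in> D"
    "p \<in> D" "(x, p) \<in> gE B"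
    using set_connected_joins_neighbour[OF sym] by metis
  have conn: "set_connected (gE B) (C \<union> D)"
    using set_connected_Un[OF sym C(2) D(2) C(4) D(3)] .
  have outside: "C \<union> D \<subseteq> gV B" "x \<in> gV B - (C \<union> D)"
    using C(1) D(1) x(1) \<open>x \<notin> C\<close> unfolding fibre_def by auto
  have "p \<in> C \<union> D" "y \<in> C \<union> D" "(y, x) \<in> gE B"
    using D(4) C(3) symD[OF sym x(2)] by auto
  then have "p = y"
    using tree_unique_neighbour_in_connected[OF tree conn outside] D(5) by blast
  moreover have "\<psi> p = \<psi> x"
    using D(1,4) unfolding fibre_def by auto
  ultimately show False
    using x(3) by simp
qed

lemma mem_tree_interval_if_image_between:
  assumes trees: "is_ftree B" "is_ftree G" and psi: "is_epi \<psi> B G" "monotone_epi \<psi> B G"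
    and x: "x \<in> gV B" "(x, y) \<in> gE B" "\<psi> x = c" and y: "y \<in> gV B" "\<psi> y = b"
    and w: "w \<in> gV B" "\<psi> w = a"
    and G: "a \<noteq> b" "b \<noteq> c" "(c, a) \<in> gE G" "(b, c) \<in> gE G"
  shows "x \<in> tree_interval B y w"
  unfolding tree_interval_def
proof (intro CollectI conjI allI impI)
  show "x \<in> gV B"
    by (fact x(1))
  fix C
  assume C: "C \<subseteq> gV B \<and> set_connected (gE B) C \<and> y \<in> C \<and> w \<in> C"
  have image_C: "set_connected (gE G) (\<psi> ` C)" "\<psi> ` C \<subseteq> gV G"
    using C set_connected_image[of "gE B" C \<psi> "gE G"] is_epi_edge[OF psi(1)] is_epi_mem[OF psi(1)]
    by blast+
  have "c \<in> \<psi> ` C"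
    using C w(2) y(2) by (intro tree_connected_through_middle[OF trees(2) image_C _ _ G(1,3,4)]) auto
  then obtain z where "z \<in> C" "\<psi> z = c"
    by blast
  moreover have "C \<subseteq> gV B" "set_connected (gE B) C" "y \<in> C" "\<psi> y \<noteq> \<psi> x"
    using C x(3) y(2) G(2) by simp_all
  moreover note x(3)
  ultimately show "x \<in> C"
    using tree_connected_reaches_fibre[OF trees(1) psi x(1,2)] by simp
qed

section \<open>Topological graphs\<close>

lemma tg_connected_subgraph:
  assumes "R \<subseteq> S"
  shows "tg_connected (subtopology T S) (E \<inter> S \<times> S) R \<longleftrightarrow> tg_connected T E R"
proof -
  have "subtopology (subtopology T S) R = subtopology T R"
    using assms by (simp add: subtopology_subtopology Int_absorb1)
  moreover have "(a, b) \<in> E \<inter> S \<times> S \<longleftrightarrow> (a, b) \<in> E" if "a \<in> R" "b \<in> R" for a b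
    using that assms by blast
  ultimately show ?thesis
    unfolding tg_connected_def by (smt (verit) Un_iff)
qed

lemma top_graph_subgraph:
  assumes "top_graph T E" "closedin T S"
  shows "top_graph (subtopology T S) (E \<inter> S \<times> S)"
  unfolding top_graph_def
proof (intro conjI)
  have "closedin (prod_topology T T) E"
    using assms(1) unfolding top_graph_def by blast
  then have "closedin (subtopology (prod_topology T T) (S \<times> S)) (S \<times> S \<inter> E)"
    by (rule closedin_subtopology_Int_closed)
  then show "closedin (prod_topology (subtopology T S) (subtopology T S)) (E \<inter> S \<times> S)"
    by (simp add: subtopology_Times Int_commute)
  show "compact_space (subtopology T S)"
    using assms closedin_compact_space compact_space_subtopology unfolding top_graph_def by blast
  show "Hausdorff_space (subtopology T S)" "subtopology T S dim_le 0"
    "second_countable (subtopology T S)"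
    using assms(1) Hausdorff_space_subtopology dimension_le_subtopology second_countable_subtopology
    unfolding top_graph_def by blast+
  show "E \<inter> S \<times> S \<subseteq> topspace (subtopology T S) \<times> topspace (subtopology T S)"
    "\<forall>v\<in>topspace (subtopology T S). (v, v) \<in> E \<inter> S \<times> S"
    "\<forall>a b. (a, b) \<in> E \<inter> S \<times> S \<longrightarrow> (b, a) \<in> E \<inter> S \<times> S"
    using assms(1) unfolding top_graph_def by auto
qed

lemma tg_embedding_subgraph:
  "S \<subseteq> topspace T \<Longrightarrow> tg_embedding (subtopology T S) (E \<inter> S \<times> S) T E id"
  unfolding tg_embedding_def embedding_map_def
  by (simp add: Int_absorb1 homeomorphic_map_id)

lemma not_endpoint_if_inner_point_of_arc:
  assumes arc: "is_arc (subtopology T S) (E \<inter> S \<times> S)" and "S \<subseteq> topspace T"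
    and x: "x \<in> S" "x \<notin> arc_endpoints (subtopology T S) (E \<inter> S \<times> S)"
  shows "\<not> is_endpoint T E x"
proof
  assume "is_endpoint T E x"
  moreover have "x \<in> id ` topspace (subtopology T S)"
    using x(1) \<open>S \<subseteq> topspace T\<close> by auto
  ultimately have "\<exists>h\<in>arc_endpoints (subtopology T S) (E \<inter> S \<times> S). id h = x"
    using arc tg_embedding_subgraph[OF \<open>S \<subseteq> topspace T\<close>] unfolding is_endpoint_def by blast
  with x(2) show False
    by simp
qed

lemma compactin_subset_incseq:
  assumes "compactin X K" "\<And>n. openin X (U n)" "K \<subseteq> (\<Union>n. U n)" "incseq U"
  shows "\<exists>N. K \<subseteq> U N"
proof -
  obtain \<F> where "finite \<F>" "\<F> \<subseteq> range U" "K \<subseteq> \<Union>\<F>"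
    using assms(1-3) unfolding compactin_def by (metis rangeE)
  then obtain I where I: "finite I" "K \<subseteq> (\<Union>i\<in>I. U i)"
    by (metis finite_subset_image)
  have "U i \<subseteq> U (Max (insert 0 I))" if "i \<in> I" for i
    using \<open>incseq U\<close> I(1) that by (simp add: incseq_def)
  with I(2) show ?thesis
    by blast
qed

lemma preimage_discrete_eq:
  "continuous_map X (discrete_topology U) f \<Longrightarrow>
    {x \<in> topspace X. P (f x)} = {x \<in> topspace X. f x \<in> {u \<in> U. P u}}"
  using continuous_map_image_subset_topspace by fastforce

lemma openin_discrete_preimage:
  assumes "continuous_map X (discrete_topology U) f"
  shows "openin X {x \<in> topspace X. P (f x)}"
  by (subst preimage_discrete_eq[OF assms]) (rule openin_continuous_map_preimage[OF assms], simp)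

lemma closedin_discrete_preimage:
  assumes "continuous_map X (discrete_topology U) f"
  shows "closedin X {x \<in> topspace X. P (f x)}"
  by (subst preimage_discrete_eq[OF assms]) (rule closedin_continuous_map_preimage[OF assms], simp)

section \<open>Inverse limits of trees along monotone epimorphisms\<close>

lemma bond_image_subset:
  assumes "\<And>n. step n ` Q (Suc n) \<subseteq> Q n"
  shows "bond step n d ` Q (n + d) \<subseteq> Q n"
proof (induction d)
  case (Suc d)
  with assms[of "n + d"] show ?case
    by (auto simp: image_subset_iff)
qed simp

lemma lifting_sequence_exists:
  assumes "\<And>n. Q n \<subseteq> step n ` Q (Suc n)" "x \<in> Q N"
  obtains up where "up 0 = x" "\<And>k. up k \<in> Q (N + k)" "\<And>k. step (N + k) (up (Suc k)) = up k"
proof -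
  have "\<exists>up. \<forall>k. (up k \<in> Q (N + k) \<and> (k = 0 \<longrightarrow> up k = x)) \<and> step (N + k) (up (Suc k)) = up k"
  proof (rule dependent_nat_choice)
    show "\<exists>z. z \<in> Q (N + 0) \<and> (0 = 0 \<longrightarrow> z = x)"
      using assms(2) by auto
    fix z k
    assume "z \<in> Q (N + k) \<and> (k = 0 \<longrightarrow> z = x)"
    then have "z \<in> step (N + k) ` Q (Suc (N + k))"
      using assms(1) by blast
    then show "\<exists>z'. (z' \<in> Q (N + Suc k) \<and> (Suc k = 0 \<longrightarrow> z' = x)) \<and> step (N + k) z' = z"
      by auto
  qed
  with that show ?thesis
    by blast
qed

locale monotone_tree_sequence =
  fixes F :: "nat \<Rightarrow> fgraph" and step :: "nat \<Rightarrow> nat \<Rightarrow> nat"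
  assumes tree: "is_ftree (F n)"
    and step_epi: "is_epi (step n) (F (Suc n)) (F n)"
    and step_monotone: "monotone_epi (step n) (F (Suc n)) (F n)"
begin

lemma fgraph_level: "is_fgraph (F n)"
  using tree unfolding is_ftree_def by blast

lemma sym_level: "sym (gE (F n))"
  using sym_gE[OF fgraph_level] .

lemma connected_level: "set_connected (gE (F n)) (gV (F n))"
  using tree unfolding is_ftree_def by blast

lemma refl_level: "v \<in> gV (F n) \<Longrightarrow> (v, v) \<in> gE (F n)"
  using fgraph_level unfolding is_fgraph_def by blast

lemma bond_epi_monotone:
  "is_epi (bond step k d) (F (k + d)) (F k) \<and> monotone_epi (bond step k d) (F (k + d)) (F k)"
proof (induction d)
  case 0
  have "bond step k 0 = id"
    by simp
  then show ?case
    using is_epi_id[OF fgraph_level] monotone_epi_id by (simp only: add_0_right)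
next
  case (Suc d)
  then have "is_epi (bond step k d \<circ> step (k + d)) (F (Suc (k + d))) (F k)"
    "monotone_epi (bond step k d \<circ> step (k + d)) (F (Suc (k + d))) (F k)"
    using is_epi_comp[OF step_epi] monotone_epi_comp[OF step_epi step_monotone sym_level] by blast+
  then show ?case
    by (simp only: bond.simps add_Suc_right)
qed

lemma bond_epi: "k \<le> n \<Longrightarrow> is_epi (bond step k (n - k)) (F n) (F k)"
  and bond_monotone: "k \<le> n \<Longrightarrow> monotone_epi (bond step k (n - k)) (F n) (F k)"
  using bond_epi_monotone[of k "n - k"] by simp_all

lemma bond_Suc_left: "bond step k (Suc d) = step k \<circ> bond step (Suc k) d"
proof (induction d)
  case (Suc d)
  have "bond step k (Suc (Suc d)) = bond step k (Suc d) \<circ> step (Suc k + d)"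
    by simp
  also have "\<dots> = (step k \<circ> bond step (Suc k) d) \<circ> step (Suc k + d)"
    by (simp only: Suc.IH)
  also have "\<dots> = step k \<circ> bond step (Suc k) (Suc d)"
    by (simp add: comp_assoc)
  finally show ?case .
qed simp

lemma thread_mem: "x \<in> limV F step \<Longrightarrow> x n \<in> gV (F n)"
  unfolding limV_def by blast

lemma thread_bond:
  assumes "x \<in> limV F step" "k \<le> n"
  shows "bond step k (n - k) (x n) = x k"
proof -
  have "bond step k d (x (k + d)) = x k" for d
    using assms(1) by (induction d) (simp_all add: limV_def)
  from this[of "n - k"] show ?thesis
    using assms(2) by simp
qed

lemma edge_down:
  assumes "x \<in> limV F step" "y \<in> limV F step" "k \<le> n" "(x n, y n) \<in> gE (F n)"
  shows "(x k, y k) \<in> gE (F k)"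
  using is_epi_edge[OF bond_epi[OF assms(3)] thread_mem[OF assms(1)] thread_mem[OF assms(2)] assms(4)]
  by (simp add: thread_bond assms)

lemma thread_exists:
  assumes Q: "\<And>n. Q n \<subseteq> gV (F n)" "\<And>n. step n ` Q (Suc n) = Q n" and x: "x \<in> Q N"
  shows "\<exists>y\<in>limV F step. (\<forall>n. y n \<in> Q n) \<and> y N = x"
proof -
  obtain up where up: "up 0 = x" "\<And>k. up k \<in> Q (N + k)" "\<And>k. step (N + k) (up (Suc k)) = up k"
    using lifting_sequence_exists[of Q step x N] Q(2) x by auto
  define y where "y n = (if N \<le> n then up (n - N) else bond step n (N - n) x)" for n
  have "y n \<in> Q n" for n
    using up(2)[of "n - N"] bond_image_subset[of step Q n "N - n"] Q(2) x unfolding y_def by auto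
  moreover have "step n (y (Suc n)) = y n" for n
  proof (cases "N \<le> n")
    case True
    then show ?thesis
      using up(3)[of "n - N"] unfolding y_def by (simp add: Suc_diff_le)
  next
    case False
    then obtain d where d: "N - n = Suc d" "N - Suc n = d"
      by (metis Suc_diff_Suc not_le)
    have "y n = step n (bond step (Suc n) d x)"
      unfolding y_def using False d(1) by (simp add: bond_Suc_left del: bond.simps(2))
    moreover have "y (Suc n) = bond step (Suc n) d x"
      unfolding y_def using d up(1) by auto
    ultimately show ?thesis
      by simp
  qed
  ultimately have "y \<in> limV F step"
    using Q(1) unfolding limV_def by blast
  moreover have "y N = x"
    unfolding y_def using up(1) by simp
  ultimately show ?thesis
    using \<open>\<And>n. y n \<in> Q n\<close> by blast
qed

lemma continuous_map_product_level:
  "continuous_map (product_topology (\<lambda>n. discrete_topology (gV (F n))) UNIV)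
    (discrete_topology (gV (F n))) (\<lambda>x. x n)"
  using continuous_map_product_projection[of n UNIV "\<lambda>n. discrete_topology (gV (F n))"] by simp

lemma continuous_map_level: "continuous_map (limT F step) (discrete_topology (gV (F n))) (\<lambda>x. x n)"
  unfolding limT_def by (rule continuous_map_from_subtopology[OF continuous_map_product_level])

lemma topspace_limT: "topspace (limT F step) = limV F step"
  unfolding limT_def using thread_mem by (auto simp: PiE_def extensional_def)

lemma openin_level: "openin (limT F step) {x \<in> limV F step. P (x n)}"
  using openin_discrete_preimage[OF continuous_map_level] by (simp add: topspace_limT)

lemma closedin_level: "closedin (limT F step) {x \<in> limV F step. P (x n)}"
  using closedin_discrete_preimage[OF continuous_map_level] by (simp add: topspace_limT)

lemma level_neighbourhood:
  assumes "openin (limT F step) V" "a \<in> V"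
  shows "\<exists>N. {x \<in> limV F step. x N = a N} \<subseteq> V"
proof -
  let ?P = "product_topology (\<lambda>n. discrete_topology (gV (F n))) UNIV"
  obtain T where T: "openin ?P T" "V = T \<inter> limV F step"
    using assms(1) unfolding limT_def openin_subtopology by blast
  then obtain U where U: "finite {i. U i \<noteq> gV (F i)}" "a \<in> Pi\<^sub>E UNIV U" "Pi\<^sub>E UNIV U \<subseteq> T"
    using assms(2) unfolding openin_product_topology_alt by auto
  define N where "N = Max (insert 0 {i. U i \<noteq> gV (F i)})"
  have "x \<in> V" if x: "x \<in> limV F step" "x N = a N" for x
  proof -
    have "x i \<in> U i" for i
    proof (cases "U i = gV (F i)")
      case False
      then have "i \<le> N"
        using U(1) unfolding N_def by simp
      then have "x i = a i"
        using thread_bond[OF x(1)] thread_bond[of a i N] x(2) assms(2) T(2) by fastforce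
      then show ?thesis
        using U(2) by auto
    qed (use thread_mem[OF x(1)] in simp)
    then show ?thesis
      using U(3) T(2) x(1) by (auto simp: PiE_def extensional_def)
  qed
  then show ?thesis
    by blast
qed

lemma closedin_limV:
  "closedin (product_topology (\<lambda>n. discrete_topology (gV (F n))) UNIV) (limV F step)"
proof -
  let ?P = "product_topology (\<lambda>n. discrete_topology (gV (F n))) UNIV"
  have pair: "continuous_map ?P (discrete_topology (gV (F (Suc n)) \<times> gV (F n))) (\<lambda>x. (x (Suc n), x n))" for n
    by (simp add: prod_topology_discrete_topology continuous_map_paired continuous_map_product_level)
  have "closedin ?P {x \<in> topspace ?P. step n (x (Suc n)) = x n}" for n
    using closedin_discrete_preimage[OF pair[of n], of "\<lambda>(p, q). step n p = q"] by simp
  then have "closedin ?P (\<Inter>n. {x \<in> topspace ?P. step n (x (Suc n)) = x n})"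
    by (intro closedin_Inter) auto
  moreover have "(\<Inter>n. {x \<in> topspace ?P. step n (x (Suc n)) = x n}) = limV F step"
    unfolding limV_def by auto
  ultimately show ?thesis
    by simp
qed

lemma continuous_map_level_pair:
  "continuous_map (prod_topology (limT F step) (limT F step))
    (discrete_topology (gV (F n) \<times> gV (F n))) (\<lambda>p. (fst p n, snd p n))"
proof -
  have "continuous_map (prod_topology (limT F step) (limT F step)) (discrete_topology (gV (F n)))
      (\<lambda>p. fst p n)" "continuous_map (prod_topology (limT F step) (limT F step))
      (discrete_topology (gV (F n))) (\<lambda>p. snd p n)"
    using continuous_map_compose[OF continuous_map_fst continuous_map_level]
      continuous_map_compose[OF continuous_map_snd continuous_map_level]
    by (simp_all add: o_def)
  then show ?thesis
    by (simp add: prod_topology_discrete_topology continuous_map_paired)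
qed

lemma closedin_limE: "closedin (prod_topology (limT F step) (limT F step)) (limE F step)"
proof -
  let ?L = "prod_topology (limT F step) (limT F step)"
  have "closedin ?L {p \<in> topspace ?L. (fst p n, snd p n) \<in> gE (F n)}" for n
    using closedin_discrete_preimage[OF continuous_map_level_pair[of n], of "\<lambda>q. q \<in> gE (F n)"]
    by simp
  then have "closedin ?L (\<Inter>n. {p \<in> topspace ?L. (fst p n, snd p n) \<in> gE (F n)})"
    by (intro closedin_Inter) auto
  moreover have "(\<Inter>n. {p \<in> topspace ?L. (fst p n, snd p n) \<in> gE (F n)}) = limE F step"
    unfolding limE_def by (auto simp: topspace_limT)
  ultimately show ?thesis
    by simp
qed

lemma compact_space_limT: "compact_space (limT F step)"
proof -
  have "compact_space (product_topology (\<lambda>n. discrete_topology (gV (F n))) UNIV)"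
    using fgraph_level unfolding compact_space_product_topology compact_space_discrete_topology
      is_fgraph_def by blast
  then show ?thesis
    unfolding limT_def using closedin_limV closedin_compact_space compact_space_subtopology by blast
qed

lemma dimension_le_0_limT: "limT F step dim_le 0"
  unfolding dimension_le_0_neighbourhood_base_of_clopen neighbourhood_base_of
proof (intro allI impI)
  fix V x
  assume V: "openin (limT F step) V \<and> x \<in> V"
  then obtain N where "{y \<in> limV F step. y N = x N} \<subseteq> V"
    using level_neighbourhood by blast
  moreover have "x \<in> limV F step"
    using V openin_subset topspace_limT by fastforce
  ultimately show "\<exists>U W. openin (limT F step) U \<and> (closedin (limT F step) W \<and> openin (limT F step) W)
      \<and> x \<in> U \<and> U \<subseteq> W \<and> W \<subseteq> V"
    using openin_level[of "\<lambda>t. t = x N" N] closedin_level[of "\<lambda>t. t = x N" N] by blast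
qed

lemma second_countable_limT: "second_countable (limT F step)"
  unfolding second_countable_def
proof (intro exI conjI)
  let ?B = "(\<lambda>(N, t). {y \<in> limV F step. y N = t}) ` (UNIV :: (nat \<times> nat) set)"
  show "countable ?B"
    by simp
  show "\<forall>V\<in>?B. openin (limT F step) V"
    using openin_level by auto
  show "\<forall>U x. openin (limT F step) U \<and> x \<in> U \<longrightarrow> (\<exists>V\<in>?B. x \<in> V \<and> V \<subseteq> U)"
  proof (intro allI impI)
    fix U x
    assume U: "openin (limT F step) U \<and> x \<in> U"
    then obtain N where "{y \<in> limV F step. y N = x N} \<subseteq> U"
      using level_neighbourhood by blast
    moreover have "x \<in> limV F step"
      using U openin_subset topspace_limT by fastforce
    ultimately show "\<exists>V\<in>?B. x \<in> V \<and> V \<subseteq> U"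
      by (intro bexI[of _ "{y \<in> limV F step. y N = x N}"]) auto
  qed
qed

lemma top_graph_limit: "top_graph (limT F step) (limE F step)"
  unfolding top_graph_def
proof (intro conjI compact_space_limT dimension_le_0_limT second_countable_limT closedin_limE)
  show "Hausdorff_space (limT F step)"
    unfolding limT_def by (simp add: Hausdorff_space_subtopology Hausdorff_space_product_topology)
  show "limE F step \<subseteq> topspace (limT F step) \<times> topspace (limT F step)"
    "\<forall>v\<in>topspace (limT F step). (v, v) \<in> limE F step"
    "\<forall>a b. (a, b) \<in> limE F step \<longrightarrow> (b, a) \<in> limE F step"
    using refl_level thread_mem symD[OF sym_level] unfolding limE_def topspace_limT by blast+
qed

definition threads :: "(nat \<Rightarrow> nat set) \<Rightarrow> (nat \<Rightarrow> nat) set" where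
  "threads Q = {y \<in> limV F step. \<forall>n. y n \<in> Q n}"

lemma closedin_threads: "closedin (limT F step) (threads Q)"
proof -
  have "threads Q = (\<Inter>n. {y \<in> limV F step. y n \<in> Q n})"
    unfolding threads_def by auto
  then show ?thesis
    by (auto intro!: closedin_Inter closedin_level)
qed

lemma level_image_threads:
  assumes "\<And>n. Q n \<subseteq> gV (F n)" "\<And>n. step n ` Q (Suc n) = Q n"
  shows "(\<lambda>y. y N) ` threads Q = Q N"
proof
  show "(\<lambda>y. y N) ` threads Q \<subseteq> Q N"
    unfolding threads_def by auto
  show "Q N \<subseteq> (\<lambda>y. y N) ` threads Q"
  proof
    fix x
    assume "x \<in> Q N"
    then obtain y where "y \<in> limV F step" "\<forall>n. y n \<in> Q n" "y N = x"
      using thread_exists[OF assms] by blast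
    then show "x \<in> (\<lambda>y. y N) ` threads Q"
      unfolding threads_def by force
  qed
qed

(* Non-adjacency at one level persists at all higher levels, so compactness of A \<times> B yields a
   single level that works for all pairs. *)
lemma nonadjacent_at_some_level:
  assumes "compactin (limT F step) A" "compactin (limT F step) B"
    and no_edge: "\<forall>a\<in>A. \<forall>b\<in>B. (a, b) \<notin> limE F step"
  shows "\<exists>N. \<forall>a\<in>A. \<forall>b\<in>B. (a N, b N) \<notin> gE (F N)"
proof -
  let ?L = "prod_topology (limT F step) (limT F step)"
  define U where "U n = {p \<in> topspace ?L. (fst p n, snd p n) \<notin> gE (F n)}" for n
  have AB: "A \<subseteq> limV F step" "B \<subseteq> limV F step"
    using compactin_subset_topspace[OF assms(1)] compactin_subset_topspace[OF assms(2)]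
    by (simp_all add: topspace_limT)
  have "compactin ?L (A \<times> B)"
    using assms(1,2) by (simp add: compactin_Times)
  moreover have "openin ?L (U n)" for n
    unfolding U_def using openin_discrete_preimage[OF continuous_map_level_pair[of n]] by simp
  moreover have "A \<times> B \<subseteq> (\<Union>n. U n)"
  proof clarify
    fix a b
    assume ab: "a \<in> A" "b \<in> B"
    with AB have "a \<in> limV F step" "b \<in> limV F step"
      by blast+
    moreover obtain n where "(a n, b n) \<notin> gE (F n)"
      using no_edge ab calculation unfolding limE_def by blast
    ultimately show "(a, b) \<in> (\<Union>n. U n)"
      unfolding U_def by (auto simp: topspace_limT)
  qed
  moreover have "incseq U"
    unfolding U_def incseq_def using edge_down by (auto simp: topspace_limT)
  ultimately obtain N where "A \<times> B \<subseteq> U N"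
    using compactin_subset_incseq by meson
  then have "\<forall>a\<in>A. \<forall>b\<in>B. (a N, b N) \<notin> gE (F N)"
    unfolding U_def by auto
  then show ?thesis ..
qed

lemma tg_connected_threads:
  assumes Q: "\<And>n. Q n \<subseteq> gV (F n)" "\<And>n. step n ` Q (Suc n) = Q n"
    "\<And>n. set_connected (gE (F n)) (Q n)"
  shows "tg_connected (limT F step) (limE F step) (threads Q)"
  unfolding tg_connected_def
proof (intro notI, elim exE conjE)
  fix A B
  assume closed: "closedin (subtopology (limT F step) (threads Q)) A"
      "closedin (subtopology (limT F step) (threads Q)) B"
    and AB: "A \<noteq> {}" "B \<noteq> {}" "A \<inter> B = {}" "A \<union> B = threads Q"
    and no_edge: "\<forall>a\<in>A. \<forall>b\<in>B. (a, b) \<notin> limE F step"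
  have "compactin (limT F step) A" "compactin (limT F step) B"
    using closedin_compact_space[OF compact_space_limT] closedin_trans_full[OF _ closedin_threads]
      closed by blast+
  from nonadjacent_at_some_level[OF this no_edge]
  obtain N where N: "\<forall>a\<in>A. \<forall>b\<in>B. (a N, b N) \<notin> gE (F N)"
    by blast
  let ?A = "(\<lambda>y. y N) ` A" and ?B = "(\<lambda>y. y N) ` B"
  have "\<not> set_connected (gE (F N)) (Q N)"
    unfolding set_connected_def not_not
  proof (rule exI[of _ ?A], rule exI[of _ ?B], intro conjI)
    show "?A \<noteq> {}" "?B \<noteq> {}"
      using AB(1,2) by blast+
    show "?A \<union> ?B = Q N"
      using level_image_threads[OF Q(1,2), of N] AB(4) by (simp flip: image_Un)
    show no_edge_N: "\<forall>a\<in>?A. \<forall>b\<in>?B. (a, b) \<notin> gE (F N)"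
      using N by auto
    show "?A \<inter> ?B = {}"
    proof (rule ccontr)
      assume "?A \<inter> ?B \<noteq> {}"
      then obtain a b where "a \<in> A" "b \<in> B" "a N = b N"
        by blast
      moreover have "a \<in> limV F step"
        using \<open>a \<in> A\<close> AB(4) unfolding threads_def by blast
      ultimately show False
        using no_edge_N refl_level[OF thread_mem] by fastforce
    qed
  qed
  with Q(3) show False
    by blast
qed

definition limit_interval :: "(nat \<Rightarrow> nat) \<Rightarrow> (nat \<Rightarrow> nat) \<Rightarrow> (nat \<Rightarrow> nat) set" where
  "limit_interval u v = threads (\<lambda>n. tree_interval (F n) (u n) (v n))"

lemma limit_interval_subset: "limit_interval u v \<subseteq> limV F step"
  unfolding limit_interval_def threads_def by blast

lemma image_tree_interval_step:
  assumes "u \<in> limV F step" "v \<in> limV F step"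
  shows "step n ` tree_interval (F (Suc n)) (u (Suc n)) (v (Suc n)) = tree_interval (F n) (u n) (v n)"
  using image_tree_interval[OF step_epi step_monotone tree thread_mem[OF assms(1)] thread_mem[OF assms(2)]]
    assms by (simp add: limV_def)

lemma ends_in_limit_interval:
  assumes "u \<in> limV F step" "v \<in> limV F step"
  shows "u \<in> limit_interval u v" "v \<in> limit_interval u v"
  using assms tree_interval_ends[OF thread_mem[OF assms(1)] thread_mem[OF assms(2)]]
  unfolding limit_interval_def threads_def by auto

lemma joined_avoiding_up:
  assumes "y \<in> limV F step" "w \<in> limV F step" "z \<in> limV F step" "k \<le> n"
    and "joined_avoiding (F k) (y k) (w k) (z k)"
  shows "joined_avoiding (F n) (y n) (w n) (z n)"
  using joined_avoiding_vimage[OF bond_epi[OF assms(4)] bond_monotone[OF assms(4)] sym_level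
      thread_mem[OF assms(1)] thread_mem[OF assms(2)] thread_mem[OF assms(3)]]
    assms by (simp add: thread_bond)

lemma openin_eventually_level:
  assumes "X \<subseteq> limV F step"
  shows "openin (subtopology (limT F step) X) {x \<in> X. \<exists>k. P k (x k)}"
proof -
  have "openin (limT F step) (\<Union>k. {x \<in> limV F step. P k (x k)})"
    using openin_level by blast
  then have "openin (subtopology (limT F step) X) (X \<inter> (\<Union>k. {x \<in> limV F step. P k (x k)}))"
    by (rule openin_subtopology_Int2)
  moreover have "X \<inter> (\<Union>k. {x \<in> limV F step. P k (x k)}) = {x \<in> X. \<exists>k. P k (x k)}"
    using assms by blast
  ultimately show ?thesis
    by simp
qed

(* Being joined to w avoiding y at some level persists at all higher levels (joined_avoiding_up);
   this makes the two sides of a cut point y open and disjoint. *)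
definition side_of :: "(nat \<Rightarrow> nat) \<Rightarrow> (nat \<Rightarrow> nat) \<Rightarrow> (nat \<Rightarrow> nat) set \<Rightarrow> (nat \<Rightarrow> nat) set" where
  "side_of y w X = {z \<in> X. \<exists>k. joined_avoiding (F k) (y k) (w k) (z k)}"

lemma sides_cover:
  assumes "u \<in> limV F step" "v \<in> limV F step" "y \<in> limV F step"
    and "X \<subseteq> limit_interval u v" "y \<notin> X"
  shows "side_of y u X \<union> side_of y v X = X"
proof
  show "X \<subseteq> side_of y u X \<union> side_of y v X"
  proof
    fix z
    assume "z \<in> X"
    with assms(5) have "z \<noteq> y"
      by blast
    then obtain k where "z k \<noteq> y k"
      by fastforce
    moreover have "z k \<in> tree_interval (F k) (u k) (v k)"
      using \<open>z \<in> X\<close> assms(4) unfolding limit_interval_def threads_def by blast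
    ultimately have "joined_avoiding (F k) (y k) (u k) (z k) \<or> joined_avoiding (F k) (y k) (v k) (z k)"
      using joined_avoiding_if_tree_interval[OF fgraph_level connected_level] thread_mem assms(1-3)
      by blast
    with \<open>z \<in> X\<close> show "z \<in> side_of y u X \<union> side_of y v X"
      unfolding side_of_def by blast
  qed
qed (auto simp: side_of_def)

lemma sides_apart:
  assumes "u \<in> limV F step" "v \<in> limV F step" "y \<in> limit_interval u v" "X \<subseteq> limV F step"
    and "a \<in> side_of y u X" "b \<in> side_of y v X"
  shows "a \<noteq> b" "(a, b) \<notin> limE F step"
proof -
  obtain k1 k2 where k: "joined_avoiding (F k1) (y k1) (u k1) (a k1)"
    "joined_avoiding (F k2) (y k2) (v k2) (b k2)"
    using assms(5,6) unfolding side_of_def by blast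
  define k where "k = max k1 k2"
  have "a \<in> limV F step" "b \<in> limV F step" "y \<in> limV F step"
    using assms(3-6) limit_interval_subset unfolding side_of_def by blast+
  then have "joined_avoiding (F k) (y k) (u k) (a k)" "joined_avoiding (F k) (y k) (v k) (b k)"
    using joined_avoiding_up[of y u a k1 k] joined_avoiding_up[of y v b k2 k] assms(1,2) k
    unfolding k_def by simp_all
  moreover have "y k \<in> tree_interval (F k) (u k) (v k)"
    using assms(3) unfolding limit_interval_def threads_def by blast
  ultimately have "a k \<noteq> b k" "(a k, b k) \<notin> gE (F k)"
    using joined_avoiding_separates[OF sym_level] by blast+
  then show "a \<noteq> b" "(a, b) \<notin> limE F step"
    unfolding limE_def by auto
qed

lemma mem_side_of: "w \<in> X \<Longrightarrow> w \<in> limV F step \<Longrightarrow> w \<noteq> y \<Longrightarrow> w \<in> side_of y w X"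
  unfolding side_of_def using joined_avoiding_refl thread_mem by fastforce

lemma cut_point_limit_interval:
  assumes uv: "u \<in> limV F step" "v \<in> limV F step"
    and y: "y \<in> limit_interval u v" "y \<noteq> u" "y \<noteq> v"
  shows "\<not> tg_connected (limT F step) (limE F step) (limit_interval u v - {y})"
proof -
  let ?S = "limit_interval u v - {y}" and ?X = "subtopology (limT F step) (limit_interval u v - {y})"
  let ?U = "side_of y u ?S" and ?V = "side_of y v ?S"
  have S: "?S \<subseteq> limV F step" "topspace ?X = ?S"
    using limit_interval_subset by (auto simp: topspace_limT)
  have cover: "?U \<union> ?V = ?S"
    using y(1) limit_interval_subset by (intro sides_cover[OF uv]) auto
  have apart: "?U \<inter> ?V = {}" "\<forall>a\<in>?U. \<forall>b\<in>?V. (a, b) \<notin> limE F step"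
    using sides_apart[OF uv y(1) S(1)] by blast+
  have mem: "u \<in> ?U" "v \<in> ?V"
    using mem_side_of ends_in_limit_interval[OF uv] uv y(2,3) by auto
  have closed: "closedin ?X ?U" "closedin ?X ?V"
  proof -
    have "openin ?X (side_of y w ?S)" for w
      unfolding side_of_def by (rule openin_eventually_level[OF S(1)])
    moreover have "topspace ?X - ?U = ?V" "topspace ?X - ?V = ?U" "?U \<subseteq> topspace ?X" "?V \<subseteq> topspace ?X"
      using cover apart(1) S(2) by blast+
    ultimately show "closedin ?X ?U" "closedin ?X ?V"
      unfolding closedin_def by simp_all
  qed
  show ?thesis
    unfolding tg_connected_def not_not
    by (rule exI[of _ ?U], rule exI[of _ ?V]) (use mem closed cover apart in blast)
qed

lemma arc_endpoints_limit_interval: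
  assumes "u \<in> limV F step" "v \<in> limV F step"
  defines "S \<equiv> limit_interval u v"
  shows "arc_endpoints (subtopology (limT F step) S) (limE F step \<inter> S \<times> S) \<subseteq> {u, v}"
proof
  fix x
  assume "x \<in> arc_endpoints (subtopology (limT F step) S) (limE F step \<inter> S \<times> S)"
  moreover have "topspace (subtopology (limT F step) S) = S"
    using limit_interval_subset unfolding S_def by (simp add: topspace_limT Int_absorb1)
  ultimately have "x \<in> S" "tg_connected (limT F step) (limE F step) (S - {x})"
    unfolding arc_endpoints_def using tg_connected_subgraph[of "S - {x}" S] by auto
  then show "x \<in> {u, v}"
    using cut_point_limit_interval[OF assms(1,2)] unfolding S_def by blast
qed

lemma is_arc_limit_interval:
  assumes uv: "u \<in> limV F step" "v \<in> limV F step"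
  defines "S \<equiv> limit_interval u v"
  shows "is_arc (subtopology (limT F step) S) (limE F step \<inter> S \<times> S)"
  unfolding is_arc_def
proof (intro conjI)
  show "top_graph (subtopology (limT F step) S) (limE F step \<inter> S \<times> S)"
    unfolding S_def limit_interval_def by (rule top_graph_subgraph[OF top_graph_limit closedin_threads])
  have "tg_connected (limT F step) (limE F step) S"
    unfolding S_def limit_interval_def
    using image_tree_interval_step[OF uv] set_connected_tree_interval[OF tree thread_mem thread_mem] uv
    by (intro tg_connected_threads) (auto simp: tree_interval_subset)
  moreover have "topspace (subtopology (limT F step) S) = S"
    using limit_interval_subset unfolding S_def by (simp add: topspace_limT Int_absorb1)
  ultimately show "tg_connected (subtopology (limT F step) S) (limE F step \<inter> S \<times> S)
      (topspace (subtopology (limT F step) S))"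
    using tg_connected_subgraph[of S S] by simp
  have "arc_endpoints (subtopology (limT F step) S) (limE F step \<inter> S \<times> S) \<subseteq> {u, v}"
    unfolding S_def by (rule arc_endpoints_limit_interval[OF uv])
  then show "finite (arc_endpoints (subtopology (limT F step) S) (limE F step \<inter> S \<times> S))"
    by (rule finite_subset) simp
  have "card {u, v} \<le> 2"
    by (cases "u = v") simp_all
  with \<open>arc_endpoints _ _ \<subseteq> {u, v}\<close>
  show "card (arc_endpoints (subtopology (limT F step) S) (limE F step \<inter> S \<times> S)) \<le> 2"
    by (meson card_mono finite.emptyI finite.insertI le_trans)
qed

lemma not_endpoint_if_in_limit_interval:
  assumes "u \<in> limV F step" "v \<in> limV F step" "e \<in> limit_interval u v" "e \<noteq> u" "e \<noteq> v"
  shows "\<not> is_endpoint (limT F step) (limE F step) e"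
  using not_endpoint_if_inner_point_of_arc[OF is_arc_limit_interval[OF assms(1,2)]]
    arc_endpoints_limit_interval[OF assms(1,2)] limit_interval_subset assms(3-5)
  by (auto simp: topspace_limT)

lemma not_endpoint_if_edge_onto_split:
  assumes ef: "(e, f) \<in> limE F step"
    and g: "is_ftree G" "is_epi g (F m) G" "monotone_epi g (F m) G" "g (e m) = c" "g (f m) = b"
    and G: "a \<in> gV G" "a \<noteq> b" "a \<noteq> c" "b \<noteq> c" "(c, a) \<in> gE G" "(b, c) \<in> gE G"
  shows "\<not> is_endpoint (limT F step) (limE F step) e"
proof -
  have e: "e \<in> limV F step" and f: "f \<in> limV F step"
    using ef unfolding limE_def by blast+
  have "\<exists>w\<in>gV (F m). g w = a"
    using is_epi_surj[OF g(2) G(1)] .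
  then obtain v where v: "v \<in> limV F step" "g (v m) = a"
    using thread_exists[of "\<lambda>n. gV (F n)"] step_epi unfolding is_epi_def by blast
  have "e n \<in> tree_interval (F n) (f n) (v n)" for n
  proof -
    define k where "k = n + m"
    have "m \<le> k" "n \<le> k"
      unfolding k_def by simp_all
    let ?\<psi> = "g \<circ> bond step m (k - m)"
    have "is_epi ?\<psi> (F k) G" "monotone_epi ?\<psi> (F k) G"
      using is_epi_comp[OF bond_epi g(2)] monotone_epi_comp[OF bond_epi bond_monotone sym_level g(2,3)]
        \<open>m \<le> k\<close> by blast+
    then have "e k \<in> tree_interval (F k) (f k) (v k)"
      using mem_tree_interval_if_image_between[OF tree g(1)] thread_mem e f v g(4,5) G(2,4-6)
        ef limE_def \<open>m \<le> k\<close> by (simp add: thread_bond)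
    then show ?thesis
      using image_tree_interval[OF bond_epi bond_monotone tree thread_mem thread_mem, of n k f v]
        \<open>n \<le> k\<close> e f v(1) by (force simp: thread_bond)
  qed
  then have "e \<in> limit_interval f v"
    unfolding limit_interval_def threads_def using e by blast
  moreover have "e \<noteq> f" "e \<noteq> v"
    using g(4,5) v(2) G(3,4) by auto
  ultimately show ?thesis
    using not_endpoint_if_in_limit_interval[OF f v(1)] by blast
qed

end

section \<open>Fraisse limits\<close>

lemma split_edge_new_edges:
  "(c, a) \<in> gE (split_edge G a b c)" "(b, c) \<in> gE (split_edge G a b c)"
  "a \<in> gV G \<Longrightarrow> a \<in> gV (split_edge G a b c)"
  unfolding split_edge_def gV_def gE_def by auto

lemma split_edge_collapse_edge:
  assumes "is_epi g B (split_edge G a b c)" "x \<in> gV B" "y \<in> gV B" "(x, y) \<in> gE B"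
    and "collapse c a (g x) = a" "collapse c a (g y) = b"
    and "c \<notin> gV G" "a \<in> gV G" "b \<in> gV G" "a \<noteq> b"
  shows "g x = c" "g y = b"
proof -
  show "g y = b"
    using assms(6,10) unfolding collapse_def by (auto split: if_splits)
  have "(g x, g y) \<in> gE (split_edge G a b c)"
    using is_epi_edge[OF assms(1-4)] .
  moreover have "(a, b) \<notin> gE (split_edge G a b c)"
    using assms(7-9) unfolding split_edge_def gE_def by auto
  ultimately show "g x = c"
    using assms(5) \<open>g y = b\<close> unfolding collapse_def by (auto split: if_splits)
qed

lemma monotone_tree_sequence_if_fraisse:
  assumes "proj_fraisse_family K D" "\<forall>A\<in>K. is_ftree A" "\<forall>(f, B, A)\<in>D. monotone_epi f B A"
    and "fraisse_sequence K D F step"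
  shows "monotone_tree_sequence F step"
proof
  fix n
  have "F n \<in> K" "(step n, F (Suc n), F n) \<in> D"
    using assms(4) unfolding fraisse_sequence_def by blast+
  then show "is_ftree (F n)" "is_epi (step n) (F (Suc n)) (F n)"
    "monotone_epi (step n) (F (Suc n)) (F n)"
    using assms(1-3) unfolding proj_fraisse_family_def by auto
qed

lemma fraisse_sequence_split_edge:
  assumes "allows_splitting_edges K D" "fraisse_sequence K D F step"
    and "(a, b) \<in> gE (F n)" "a \<noteq> b"
  obtains c m g where "c \<notin> gV (F n)" "n \<le> m" "(g, F m, split_edge (F n) a b c) \<in> D"
    "\<forall>x\<in>gV (F m). collapse c a (g x) = bond step n (m - n) x"
proof -
  have "F n \<in> K"
    using assms(2) unfolding fraisse_sequence_def by blast
  then obtain c where c: "c \<notin> gV (F n)" "(collapse c a, split_edge (F n) a b c, F n) \<in> D"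
    using assms(1,3,4) unfolding allows_splitting_edges_def by blast
  moreover obtain m g where "n \<le> m" "(g, F m, split_edge (F n) a b c) \<in> D"
    "\<forall>x\<in>gV (F m). collapse c a (g x) = bond step n (m - n) x"
    using c(2) assms(2) unfolding fraisse_sequence_def by blast
  ultimately show ?thesis
    using that by blast
qed

lemma (in monotone_tree_sequence) fraisse_edge_onto_split_edge:
  assumes "proj_fraisse_family K D" "\<forall>A\<in>K. is_ftree A" "\<forall>(f, B, A)\<in>D. monotone_epi f B A"
    and "allows_splitting_edges K D" "fraisse_sequence K D F step"
    and ef: "(e, f) \<in> limE F step" "e n \<noteq> f n"
  obtains G g m c where "is_ftree G" "is_epi g (F m) G" "monotone_epi g (F m) G"
    "g (e m) = c" "g (f m) = f n" "e n \<in> gV G" "e n \<noteq> c" "f n \<noteq> c"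
    "(c, e n) \<in> gE G" "(f n, c) \<in> gE G"
proof -
  have lim: "e \<in> limV F step" "f \<in> limV F step" "(e n, f n) \<in> gE (F n)"
    using ef(1) unfolding limE_def by blast+
  obtain c m g where c: "c \<notin> gV (F n)" and "n \<le> m"
    and g: "(g, F m, split_edge (F n) (e n) (f n) c) \<in> D"
    and collapse: "\<forall>x\<in>gV (F m). collapse c (e n) (g x) = bond step n (m - n) x"
    using fraisse_sequence_split_edge[OF assms(4,5) lim(3) ef(2)] by blast
  let ?G = "split_edge (F n) (e n) (f n) c"
  have G: "is_epi g (F m) ?G" "monotone_epi g (F m) ?G" "is_ftree ?G"
    using g assms(1-3) unfolding proj_fraisse_family_def by auto
  have "collapse c (e n) (g (e m)) = e n" "collapse c (e n) (g (f m)) = f n"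
    using collapse thread_mem thread_bond lim(1,2) \<open>n \<le> m\<close> by simp_all
  moreover have "(e m, f m) \<in> gE (F m)"
    using ef(1) unfolding limE_def by blast
  ultimately have "g (e m) = c" "g (f m) = f n"
    using split_edge_collapse_edge[OF G(1) thread_mem[OF lim(1)] thread_mem[OF lim(2)]]
      c thread_mem[OF lim(1)] thread_mem[OF lim(2)] ef(2) by blast+
  moreover have "e n \<noteq> c" "f n \<noteq> c"
    using c lim thread_mem by auto
  ultimately show ?thesis
    using that G split_edge_new_edges thread_mem[OF lim(1)] by blast
qed

theorem mainTheorem12:
  fixes K :: "fgraph set" and D :: "((nat \<Rightarrow> nat) \<times> fgraph \<times> fgraph) set"
    and F :: "nat \<Rightarrow> fgraph" and step :: "nat \<Rightarrow> nat \<Rightarrow> nat" and e :: "nat \<Rightarrow> nat"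
  assumes "proj_fraisse_family K D"
    and "\<forall>A\<in>K. is_ftree A"
    and "\<forall>(f,B,A)\<in>D. monotone_epi f B A \<and> weakly_coherent f B A"
    and "allows_splitting_edges K D"
    and "fraisse_sequence K D F step"
    and "is_endpoint (limT F step) (limE F step) e"
  shows "\<not> (\<exists>f\<in>limV F step. f \<noteq> e \<and> (e, f) \<in> limE F step)"
proof
  assume "\<exists>f\<in>limV F step. f \<noteq> e \<and> (e, f) \<in> limE F step"
  then obtain f where f: "f \<noteq> e" "(e, f) \<in> limE F step"
    by blast
  have monotone: "\<forall>(f, B, A)\<in>D. monotone_epi f B A"
    using assms(3) by auto
  interpret monotone_tree_sequence F step
    by (rule monotone_tree_sequence_if_fraisse[OF assms(1,2) monotone assms(5)])
  obtain n where "e n \<noteq> f n"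
    using f(1) by fastforce
  then obtain G g m c where "is_ftree G" "is_epi g (F m) G" "monotone_epi g (F m) G"
    "g (e m) = c" "g (f m) = f n" "e n \<in> gV G" "e n \<noteq> c" "f n \<noteq> c"
    "(c, e n) \<in> gE G" "(f n, c) \<in> gE G"
    using fraisse_edge_onto_split_edge[OF assms(1,2) monotone assms(4,5) f(2)] by blast
  then have "\<not> is_endpoint (limT F step) (limE F step) e"
    using not_endpoint_if_edge_onto_split[OF f(2)] \<open>e n \<noteq> f n\<close> by blast
  with assms(6) show False
    by contradiction
qed

end
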